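(* Suppose that $P[A_{1,0,y}^3]<\infty$ for all $y$ and that the random variable $\sum_{x\in\mathbb Z^d}A_{1,x,0}$ is not almost surely constant. Let $\rho^*_{t,x}=\mathbf 1_{\{|M_t|>0\}}M_{t,x}/|M_t|$ and $V_t=\frac1{|a|}\sum_{x,y\in\mathbb Z^d}\rho^*_{t-1,y}A_{t,x,y}$. Then for each $h\in(0,1)$ there is a constant $c\in(0,\infty)$ such that, almost surely, $$P\big[1-V_t^h\,\big|\,\mathcal F_{t-1}\big]\ge c\,\big|(\rho^*_{t-1})^2\big|\quad\text{for all }t\in\mathbb N^*.$$
   Context: Let $d\ge1$. For $x\in\mathbb R^d$, $|x|=\sum_i|x_i|$; for $\xi\in\mathbb R^{\mathbb Z^d}$, $|\xi|=\sum_{x}|\xi_x|$, and $\xi^2=(\xi_x^2)_x$. Let $A_t=(A_{t,x,y})_{x,y\in\mathbb Z^d}$, $t=1,2,\dots$, be i.i.d. random matrices on a probability space $(\Omega,\mathcal F,P)$ such that: (i) $A_{1,x,y}\ge0$; (ii) the columns $\{A_{1,\cdot,y}\}_{y\in\mathbb Z^d}$ are independent; (iii) $P[A_{1,x,y}^2]<\infty$ for all $x,y$; (iv) there is a nonrandom $r_A\in\mathbb N$ with $A_{1,x,y}=0$ a.s. if $|x-y|>r_A$; (v) $(A_{1,x+z,y+z})_{x,y}$ has the same law as $A_1$ for every $z\in\mathbb Z^d$; (vi) with $a_y=P[A_{1,0,y}]$, the set $\{x:\sum_y a_{x+y}a_y\neq0\}$ contains a linear basis of $\mathbb R^d$. Put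 $|a|=\sum_y a_y$, $\mathcal F_t=\sigma(A_1,\dots,A_t)$ ($\mathcal F_0$ trivial). Dual process: given a nonrandom $M_0\in[0,\infty)^{\mathbb Z^d}$ with $\{x:M_{0,x}>0\}$ finite and nonempty, $M_{t,y}=\sum_xA_{t,y,x}M_{t-1,x}$ ($t\ge1$), $|M_t|=\sum_yM_{t,y}$. *)

theory Defs
  imports "HOL-Probability.Probability"
begin

text \<open>Sites of the lattice Z^d are vectors int ^ 'd, 'd a finite index type (d = CARD('d) \<ge> 1).
  A random matrix sequence is A :: nat \<Rightarrow> 'w \<Rightarrow> int^'d \<Rightarrow> int^'d \<Rightarrow> real,
  A t \<omega> x y = A_{t,x,y}(\<omega>).\<close>

definition norm1 :: "int ^ 'd \<Rightarrow> int" where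
  "norm1 x = (\<Sum>i\<in>UNIV. \<bar>x $ i\<bar>)"

definition real_vec :: "int ^ 'd \<Rightarrow> real ^ 'd" where
  "real_vec x = (\<chi> i. real_of_int (x $ i))"

definition mat_of :: "('w \<Rightarrow> int^'d \<Rightarrow> int^'d \<Rightarrow> real) \<Rightarrow> 'w \<Rightarrow> ((int^'d) \<times> (int^'d)) \<Rightarrow> real" where
  "mat_of B \<omega> = (\<lambda>(x, y). B \<omega> x y)"

abbreviation mat_space :: "(((int^'d) \<times> (int^'d)) \<Rightarrow> real) measure" where
  "mat_space \<equiv> PiM UNIV (\<lambda>_. borel)"

abbreviation col_space :: "(int^'d \<Rightarrow> real) measure" where
  "col_space \<equiv> PiM UNIV (\<lambda>_. borel)"

definition filt :: "'w measure \<Rightarrow> (nat \<Rightarrow> 'w \<Rightarrow> int^'d \<Rightarrow> int^'d \<Rightarrow> real) \<Rightarrow> nat \<Rightarrow> 'w measure" where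
  "filt M A t = sigma (space M)
     {(\<lambda>\<omega>. A s \<omega> x y) -` B \<inter> space M | s x y B. s \<in> {1..t} \<and> B \<in> sets borel}"

definition mean_a :: "'w measure \<Rightarrow> (nat \<Rightarrow> 'w \<Rightarrow> int^'d \<Rightarrow> int^'d \<Rightarrow> real) \<Rightarrow> int^'d \<Rightarrow> real" where
  "mean_a M A y = integral\<^sup>L M (\<lambda>\<omega>. A 1 \<omega> 0 y)"

definition abs_a :: "'w measure \<Rightarrow> (nat \<Rightarrow> 'w \<Rightarrow> int^'d \<Rightarrow> int^'d \<Rightarrow> real) \<Rightarrow> real" where
  "abs_a M A = infsum (mean_a M A) UNIV"

primrec dualM :: "(nat \<Rightarrow> 'w \<Rightarrow> int^'d \<Rightarrow> int^'d \<Rightarrow> real) \<Rightarrow> (int^'d \<Rightarrow> real) \<Rightarrow> nat \<Rightarrow> 'w \<Rightarrow> int^'d \<Rightarrow> real" where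
  "dualM A M0 0 \<omega> = M0"
| "dualM A M0 (Suc t) \<omega> = (\<lambda>y. infsum (\<lambda>x. A (Suc t) \<omega> y x * dualM A M0 t \<omega> x) UNIV)"

definition totM :: "(nat \<Rightarrow> 'w \<Rightarrow> int^'d \<Rightarrow> int^'d \<Rightarrow> real) \<Rightarrow> (int^'d \<Rightarrow> real) \<Rightarrow> nat \<Rightarrow> 'w \<Rightarrow> real" where
  "totM A M0 t \<omega> = infsum (dualM A M0 t \<omega>) UNIV"

definition rho_star :: "(nat \<Rightarrow> 'w \<Rightarrow> int^'d \<Rightarrow> int^'d \<Rightarrow> real) \<Rightarrow> (int^'d \<Rightarrow> real) \<Rightarrow> nat \<Rightarrow> 'w \<Rightarrow> int^'d \<Rightarrow> real" where
  "rho_star A M0 t \<omega> x = (if totM A M0 t \<omega> > 0 then dualM A M0 t \<omega> x / totM A M0 t \<omega> else 0)"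

definition V_t :: "'w measure \<Rightarrow> (nat \<Rightarrow> 'w \<Rightarrow> int^'d \<Rightarrow> int^'d \<Rightarrow> real) \<Rightarrow> (int^'d \<Rightarrow> real) \<Rightarrow> nat \<Rightarrow> 'w \<Rightarrow> real" where
  "V_t M A M0 t \<omega> = (1 / abs_a M A) *
     infsum (\<lambda>(x, y). rho_star A M0 (t - 1) \<omega> y * A t \<omega> x y) UNIV"

end

theory Submission
  imports Defs
begin

(* Write K for the (finite) set of sites where M_{t-1} can be positive, rho_y for the
   profile rho*_{t-1,y} and xi_y = (sum_x A_{t,x,y}) / |a| - 1 for the normalized
   fluctuation of the y-th column of A_t.  When |M_{t-1}| > 0 one has
   V_t = 1 + W_t with W_t = sum_{y in K} rho_y xi_y, and otherwise V_t = 0 and W_t = 0.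

   (1) Elementary calculus: for w >= -1 and L > 2,
       1 - (1+w)^h >= -h w + k (1 - 2/L) w^2 - (k/L) w^3 with k = h(1-h)/2 (1+L)^(h-2).
   (2) The columns of A_t are independent, shift invariant, centred after normalization
       and have finite third moments; hence E[xi_a xi_b] = sigma2 [a=b] and
       E[xi_a xi_b xi_c] = mu3 [a=b=c], with sigma2 > 0 because the column sum is not
       a.s. constant.
   (3) A_t is independent of F_{t-1} while rho is F_{t-1}-measurable, so
       E[W_t | F_{t-1}] = 0, E[W_t^2 | F_{t-1}] = sigma2 |rho^2| and
       E[W_t^3 | F_{t-1}] = mu3 |rho^3|, where 0 <= |rho^3| <= |rho^2|.
   Taking conditional expectations in (1) with L = 3 + |mu3|/sigma2 gives the bound with
   c = k sigma2 / L. *)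


lemma powr_tangent_gap_quadratic:
  fixes h U v :: real
  assumes h0: "0 < h" and h1: "h < 1" and U: "U \<ge> 1" and v0: "0 \<le> v" and vU: "v \<le> U"
  shows "1 - v powr h + h * (v - 1) \<ge> (h * (1 - h) / 2 * U powr (h - 2)) * (v - 1)\<^sup>2"
proof -
  define k where "k = h * (1 - h) / 2 * U powr (h - 2)"
  have Upw: "U powr (h - 2) \<le> 1" using powr_mono[of "h - 2" 0 U] U h1 by simp
  have Upos: "U powr (h - 2) > 0" using U by simp
  have k0: "0 \<le> k" "k \<le> h * (1 - h) / 2" unfolding k_def using h0 h1 Upw Upos
    by (auto intro!: mult_nonneg_nonneg simp: mult_left_le)
  define phi where "phi v = 1 - v powr h + h * (v - 1) - k * (v - 1)\<^sup>2" for v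
  define dphi where "dphi v = - (h * v powr (h - 1)) + h - 2 * k * (v - 1)" for v
  have dphi: "DERIV phi x :> dphi x" if "x > 0" for x
    unfolding phi_def dphi_def using that
    by (auto intro!: derivative_eq_intros simp: power2_eq_square algebra_simps)
  have ddphi: "DERIV dphi x :> (h * (1 - h) * x powr (h - 2) - 2 * k)" if "x > 0" for x
    unfolding dphi_def using that
    by (auto intro!: derivative_eq_intros simp: algebra_simps)
  have convex: "h * (1 - h) * x powr (h - 2) - 2 * k \<ge> 0" if "0 < x" "x \<le> U" for x
  proof -
    have "U powr (h - 2) \<le> x powr (h - 2)" using that h1 by (intro powr_mono2') auto
    then have "h * (1 - h) * U powr (h - 2) \<le> h * (1 - h) * x powr (h - 2)"
      using h0 h1 by (intro mult_left_mono) auto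
    then show ?thesis unfolding k_def by simp
  qed
  have dneg: "dphi x \<le> 0" if "0 < x" "x \<le> 1" for x
  proof -
    have "dphi x \<le> dphi 1"
      by (rule DERIV_nonneg_imp_nondecreasing[OF that(2)])
         (use that U in \<open>auto intro!: exI ddphi convex\<close>)
    then show ?thesis by (simp add: dphi_def)
  qed
  have dpos: "dphi x \<ge> 0" if "1 \<le> x" "x \<le> U" for x
  proof -
    have "dphi 1 \<le> dphi x"
      by (rule DERIV_nonneg_imp_nondecreasing[OF that(1)])
         (use that U in \<open>auto intro!: exI ddphi convex\<close>)
    then show ?thesis by (simp add: dphi_def)
  qed
  have "phi v \<ge> phi 1"
  proof (cases "v \<ge> 1")
    case True
    show ?thesis
      by (rule DERIV_nonneg_imp_nondecreasing[OF True]) (use vU in \<open>auto intro!: exI dphi dpos\<close>)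
  next
    case False
    show ?thesis
    proof (cases "v = 0")
      case True
      have "(1 - h) * (2 - h) \<ge> 0" using h1 by (intro mult_nonneg_nonneg) auto
      then show ?thesis unfolding phi_def using k0 h0 h1 True
        by (simp add: power2_eq_square algebra_simps)
    next
      case nz: False
      then have "v > 0" using v0 by simp
      show ?thesis
        by (rule DERIV_nonpos_imp_nonincreasing) (use False \<open>v > 0\<close> in \<open>auto intro!: exI dphi dneg\<close>)
    qed
  qed
  then show ?thesis unfolding phi_def k_def by simp
qed

lemma powr_tangent_gap_nonneg:
  fixes h v :: real
  assumes h0: "0 < h" and h1: "h < 1" and v0: "0 \<le> v"
  shows "1 - v powr h + h * (v - 1) \<ge> 0"
proof -
  have "(h * (1 - h) / 2 * (max 1 v) powr (h - 2)) * (v - 1)\<^sup>2 \<ge> 0"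
    using h0 h1 by (intro mult_nonneg_nonneg) auto
  also have "\<dots> \<le> 1 - v powr h + h * (v - 1)"
    by (rule powr_tangent_gap_quadratic) (use assms in auto)
  finally show ?thesis .
qed

text \<open>The cubic correction makes the bound hold also for large \<open>w\<close>,
  where the quadratic gap estimate degenerates.\<close>

lemma one_minus_powr_cubic_lower:
  fixes h L w :: real
  assumes h0: "0 < h" and h1: "h < 1" and L: "L > 2" and w: "w \<ge> -1"
  defines "k \<equiv> h * (1 - h) / 2 * (1 + L) powr (h - 2)"
  shows "1 - (1 + w) powr h \<ge> - h * w + k * (1 - 2 / L) * w\<^sup>2 - (k / L) * w ^ 3"
proof -
  have k0: "k \<ge> 0" unfolding k_def using h0 h1 by (intro mult_nonneg_nonneg) auto
  have tangent: "1 - (1 + w) powr h + h * ((1 + w) - 1) \<ge> 0"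
    by (rule powr_tangent_gap_nonneg) (use assms in auto)
  show ?thesis
  proof (cases "w \<le> L")
    case True
    have eq: "k * (1 - 2 / L) * w\<^sup>2 - (k / L) * w ^ 3 = k * w\<^sup>2 - (k / L) * w\<^sup>2 * (2 + w)"
      using L by (simp add: field_simps power2_eq_square power3_eq_cube)
    have quad: "k * ((1 + w) - 1)\<^sup>2 \<le> 1 - (1 + w) powr h + h * ((1 + w) - 1)"
      unfolding k_def by (rule powr_tangent_gap_quadratic) (use assms True in auto)
    have "(k / L) * w\<^sup>2 * (2 + w) \<ge> 0" using k0 L w by (intro mult_nonneg_nonneg) auto
    then have "k * (1 - 2 / L) * w\<^sup>2 - (k / L) * w ^ 3 \<le> k * w\<^sup>2" unfolding eq by linarith
    then show ?thesis using quad by simp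
  next
    case False
    have eq: "k * (1 - 2 / L) * w\<^sup>2 - (k / L) * w ^ 3 = - ((k / L) * w\<^sup>2 * (2 + w - L))"
      using L by (simp add: field_simps power2_eq_square power3_eq_cube)
    have "(k / L) * w\<^sup>2 * (2 + w - L) \<ge> 0" using k0 L False by (intro mult_nonneg_nonneg) auto
    then have "k * (1 - 2 / L) * w\<^sup>2 - (k / L) * w ^ 3 \<le> 0" unfolding eq by linarith
    then show ?thesis using tangent by simp
  qed
qed

lemma abs_one_minus_powr_le:
  fixes v h :: real
  assumes "v \<ge> 0" "0 < h" "h < 1"
  shows "\<bar>1 - v powr h\<bar> \<le> 2 + v"
proof -
  have "v powr h \<le> 1 + v"
  proof (cases "v \<le> 1")
    case True
    then have "v powr h \<le> 1" using assms by (intro powr_le1) auto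
    then show ?thesis using assms by simp
  next
    case False
    then have "v powr h \<le> v powr 1" using assms by (intro powr_mono) auto
    then show ?thesis using False by simp
  qed
  moreover have "v powr h \<ge> 0" by simp
  ultimately show ?thesis by linarith
qed

text \<open>Pointwise bounds of products and sums by cubes; they show that random variables with
  finite third absolute moment form a space closed under sums and whose products of two
  or three elements are integrable.\<close>

lemma prod3_le_sum_cubes:
  fixes a b c :: real
  assumes "a \<ge> 0" "b \<ge> 0" "c \<ge> 0"
  shows "a * b * c \<le> a ^ 3 + b ^ 3 + c ^ 3"
proof -
  define m where "m = max a (max b c)"
  have m: "a \<le> m" "b \<le> m" "c \<le> m" "0 \<le> m" using assms unfolding m_def by auto
  have "a * b * c \<le> m * m * m" using m assms by (intro mult_mono) auto
  also have "\<dots> = m ^ 3" by (simp add: power3_eq_cube)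
  also have "\<dots> \<le> a ^ 3 + b ^ 3 + c ^ 3" using assms unfolding m_def by (auto simp: max_def)
  finally show ?thesis .
qed

lemma abs_prod_le_sum_cubes:
  fixes a b :: real
  shows "\<bar>a * b\<bar> \<le> \<bar>a\<bar> ^ 3 + \<bar>b\<bar> ^ 3 + 1"
proof -
  have "\<bar>a\<bar> * \<bar>b\<bar> * 1 \<le> \<bar>a\<bar> ^ 3 + \<bar>b\<bar> ^ 3 + 1 ^ 3"
    by (rule prod3_le_sum_cubes) auto
  then show ?thesis by (simp add: abs_mult)
qed

lemma abs_le_cube_plus_one:
  fixes a :: real
  shows "\<bar>a\<bar> \<le> \<bar>a\<bar> ^ 3 + 1"
proof (cases "\<bar>a\<bar> \<le> 1")
  case True
  then show ?thesis by (smt (verit) zero_le_power abs_ge_zero)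
next
  case False
  then have "\<bar>a\<bar> * 1 * 1 \<le> \<bar>a\<bar> * \<bar>a\<bar> * \<bar>a\<bar>" by (intro mult_mono) auto
  then show ?thesis by (simp add: power3_eq_cube)
qed

lemma cube_of_sum_le:
  fixes a b :: real
  assumes "a \<ge> 0" "b \<ge> 0"
  shows "(a + b) ^ 3 \<le> 4 * (a ^ 3 + b ^ 3)"
proof -
  have "4 * (a ^ 3 + b ^ 3) - (a + b) ^ 3 = 3 * (a + b) * (a - b)\<^sup>2"
    by (simp add: power2_eq_square power3_eq_cube algebra_simps)
  moreover have "3 * (a + b) * (a - b)\<^sup>2 \<ge> 0" using assms by simp
  ultimately show ?thesis by linarith
qed

text \<open>Diagonal collapse of double and triple sums against a Kronecker delta; these turn the
  mixed moments of the column fluctuations into sums of powers of the profile.\<close>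

lemma sum_pairs_diagonal:
  fixes f :: "'a \<Rightarrow> real"
  assumes "finite K"
  shows "(\<Sum>p\<in>K \<times> K. f (fst p) * f (snd p) * (if fst p = snd p then c else 0))
       = c * (\<Sum>a\<in>K. f a * f a)"
proof -
  have "(\<Sum>p\<in>K \<times> K. f (fst p) * f (snd p) * (if fst p = snd p then c else 0))
      = (\<Sum>a\<in>K. \<Sum>b\<in>K. f a * f b * (if a = b then c else 0))"
    by (simp add: sum.cartesian_product split_beta)
  also have "\<dots> = (\<Sum>a\<in>K. \<Sum>b\<in>K. if a = b then f a * f a * c else 0)"
    by (intro sum.cong) auto
  also have "\<dots> = (\<Sum>a\<in>K. f a * f a * c)" using assms by simp
  finally show ?thesis by (simp add: sum_distrib_left ac_simps)
qed

lemma sum_triples_diagonal: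
  fixes f :: "'a \<Rightarrow> real"
  assumes "finite K"
  shows "(\<Sum>p\<in>K \<times> K \<times> K. f (fst p) * f (fst (snd p)) * f (snd (snd p)) *
            (if fst p = fst (snd p) \<and> fst (snd p) = snd (snd p) then c else 0))
       = c * (\<Sum>a\<in>K. f a * f a * f a)"
proof -
  have "(\<Sum>p\<in>K \<times> K \<times> K. f (fst p) * f (fst (snd p)) * f (snd (snd p)) *
            (if fst p = fst (snd p) \<and> fst (snd p) = snd (snd p) then c else 0))
      = (\<Sum>a\<in>K. \<Sum>q\<in>K \<times> K. f a * f (fst q) * f (snd q) *
            (if a = fst q \<and> fst q = snd q then c else 0))"
    by (simp add: sum.cartesian_product split_beta)
  also have "\<dots> = (\<Sum>a\<in>K. \<Sum>q\<in>K \<times> K. if q = (a, a) then f a * f a * f a * c else 0)"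
    by (intro sum.cong) auto
  also have "\<dots> = (\<Sum>a\<in>K. f a * f a * f a * c)" using assms by simp
  finally show ?thesis by (simp add: sum_distrib_left ac_simps)
qed

text \<open>Over a countably infinite index set, a real \<open>infsum\<close> is the series along any
  enumeration when it converges absolutely and \<open>0\<close> otherwise; this gives measurability of
  pointwise infinite sums of measurable functions, needed for the dual process and \<open>V_t\<close>.\<close>

lemma infsum_nat_real_eq:
  fixes g :: "nat \<Rightarrow> real"
  shows "infsum g UNIV = (if summable (\<lambda>n. \<bar>g n\<bar>) then suminf g else 0)"
proof (cases "summable (\<lambda>n. \<bar>g n\<bar>)")
  case True
  then have s: "summable (\<lambda>n. norm (g n))" by simp
  have "(g has_sum suminf g) UNIV"
    by (rule norm_summable_imp_has_sum[OF s])
       (use summable_norm_cancel[OF s] in \<open>simp add: summable_sums\<close>)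
  then show ?thesis using True by (simp add: infsumI)
next
  case False
  have "\<not> g summable_on UNIV"
  proof
    assume "g summable_on UNIV"
    then have "(\<lambda>n. norm (g n)) summable_on UNIV" using summable_on_iff_abs_summable_on_real by blast
    then have "summable (\<lambda>n. norm (g n))" by (rule summable_on_imp_summable)
    then show False using False by simp
  qed
  then show ?thesis using False by (simp add: infsum_not_exists)
qed

lemma borel_measurable_infsum_countable:
  fixes f :: "'i::countable \<Rightarrow> 'a \<Rightarrow> real"
  assumes inf: "infinite (UNIV::'i set)" and f[measurable]: "\<And>i. f i \<in> borel_measurable M"
  shows "(\<lambda>x. infsum (\<lambda>i. f i x) UNIV) \<in> borel_measurable M"
proof -
  define e where "e = from_nat_into (UNIV::'i set)"
  have bij: "bij_betw e UNIV UNIV"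
    unfolding e_def by (rule bij_betw_from_nat_into) (use inf in auto)
  have eq: "infsum (\<lambda>i. f i x) UNIV
      = (if summable (\<lambda>n. \<bar>f (e n) x\<bar>) then suminf (\<lambda>n. f (e n) x) else 0)" for x
    using infsum_reindex_bij_betw[OF bij, of "\<lambda>i. f i x"] infsum_nat_real_eq[of "\<lambda>n. f (e n) x"]
    by simp
  have [measurable]: "Measurable.pred M (\<lambda>x. summable (\<lambda>n. \<bar>f (e n) x\<bar>))"
  proof -
    have "{x\<in>space M. Cauchy (\<lambda>n. \<Sum>i<n. \<bar>f (e i) x\<bar>)} \<in> sets M"
      by (rule sets_Collect_Cauchy) measurable
    then show ?thesis unfolding pred_def summable_iff_convergent Cauchy_convergent_iff .
  qed
  show ?thesis unfolding eq by measurable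
qed

lemma infsum_finite_support:
  fixes f :: "'a \<Rightarrow> real"
  assumes "finite S" "\<And>x. x \<notin> S \<Longrightarrow> f x = 0"
  shows "infsum f UNIV = sum f S"
proof -
  have "infsum f UNIV = infsum f S" by (rule infsum_cong_neutral) (use assms in auto)
  then show ?thesis using assms by simp
qed

text \<open>The lattice \<open>\<int>^d\<close> is infinite and its \<open>\<ell>\<^sub>1\<close>-balls \<open>B_r = {u. |u| \<le> r}\<close> are finite and
  symmetric; \<open>B_r\<close> contains the possible jumps \<open>x - y\<close> of the finite-range matrices.\<close>

lemma infinite_vec_int: "infinite (UNIV :: (int^'d) set)"
proof
  assume "finite (UNIV :: (int^'d) set)"
  then have "finite (range (\<lambda>n::int. (vec n :: int^'d)))" by (rule finite_subset[rotated]) auto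
  moreover have "inj (\<lambda>n::int. (vec n :: int^'d))" by (auto simp: inj_def vec_eq_iff)
  ultimately have "finite (UNIV :: int set)" using finite_imageD by blast
  then show False by simp
qed

definition ball1 :: "nat \<Rightarrow> (int^'d) set" where
  "ball1 r = {u. norm1 u \<le> int r}"

lemma finite_ball1: "finite (ball1 r :: (int^'d) set)"
proof -
  let ?S = "{-int r..int r}"
  have "(ball1 r :: (int^'d) set) \<subseteq> vec_lambda ` (PiE UNIV (\<lambda>_. ?S))"
  proof
    fix u :: "int^'d" assume "u \<in> ball1 r"
    then have n: "(\<Sum>i\<in>UNIV. \<bar>u $ i\<bar>) \<le> int r" by (simp add: ball1_def norm1_def)
    have "\<bar>u $ i\<bar> \<le> (\<Sum>i\<in>UNIV. \<bar>u $ i\<bar>)" for i by (rule member_le_sum) auto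
    then have "\<bar>u $ i\<bar> \<le> int r" for i using n order_trans by blast
    then have "- int r \<le> u $ i \<and> u $ i \<le> int r" for i by (metis abs_le_iff minus_le_iff)
    then have "vec_nth u \<in> PiE UNIV (\<lambda>_. ?S)" by auto
    then show "u \<in> vec_lambda ` (PiE UNIV (\<lambda>_. ?S))" by (intro image_eqI[of _ _ "vec_nth u"]) auto
  qed
  moreover have "finite (PiE (UNIV::'d set) (\<lambda>_. ?S))" by (intro finite_PiE) auto
  ultimately show ?thesis by (meson finite_imageI finite_subset)
qed

lemma norm1_uminus: "norm1 (- u) = norm1 (u :: int^'d)"
  by (simp add: norm1_def)

lemma uminus_ball1: "uminus ` ball1 r = (ball1 r :: (int^'d) set)"
proof -
  have sym: "u \<in> ball1 r \<longleftrightarrow> - u \<in> ball1 r" for u :: "int^'d"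
    by (simp add: ball1_def norm1_uminus)
  have "v \<in> uminus ` ball1 r" if "v \<in> ball1 r" for v :: "int^'d"
    using that sym[of v] by (intro image_eqI[of _ _ "- v"]) auto
  then show ?thesis using sym by auto
qed

definition shift_mat :: "int^'d \<Rightarrow> ((int^'d) \<times> (int^'d) \<Rightarrow> real) \<Rightarrow> ((int^'d) \<times> (int^'d) \<Rightarrow> real)"
  where "shift_mat z m = (\<lambda>(x, y). m (x + z, y + z))"

lemma shift_mat_measurable[measurable]: "shift_mat z \<in> measurable mat_space mat_space"
  unfolding shift_mat_def by (rule measurable_PiM_single') (auto simp: split_beta)

text \<open>Choice of the cut-off \<open>L\<close> in terms of the second and third moments \<open>s > 0\<close> and \<open>m\<close>:
  with \<open>L = 3 + |m|/s\<close>, the averaged cubic bound dominates a positive multiple of the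
  quadratic term, using only \<open>0 \<le> a3 \<le> a2\<close>.\<close>

lemma cubic_coefficients_lower:
  fixes s m k a2 a3 :: real
  assumes s: "s > 0" and k: "k \<ge> 0" and a: "0 \<le> a3" "a3 \<le> a2"
  defines "L \<equiv> 3 + \<bar>m\<bar> / s"
  shows "k * (1 - 2 / L) * (s * a2) - k / L * (m * a3) \<ge> k * s / L * a2"
proof -
  have L: "L > 0" "(L - 2) * s = s + \<bar>m\<bar>" unfolding L_def using s by (auto simp: field_simps)
  have "m * a3 \<le> \<bar>m\<bar> * a2"
  proof -
    have "m * a3 \<le> \<bar>m\<bar> * a3" using a by (intro mult_right_mono) auto
    also have "\<dots> \<le> \<bar>m\<bar> * a2" using a by (intro mult_left_mono) auto
    finally show ?thesis .
  qed
  then have "k / L * (m * a3) \<le> k / L * (\<bar>m\<bar> * a2)"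
    using k L by (intro mult_left_mono) auto
  moreover have "k * (1 - 2 / L) * (s * a2) - k / L * (\<bar>m\<bar> * a2) = k * s / L * a2"
  proof -
    have "k * (1 - 2 / L) * (s * a2) - k / L * (\<bar>m\<bar> * a2) = k / L * a2 * ((L - 2) * s - \<bar>m\<bar>)"
      using L(1) by (simp add: field_simps)
    also have "\<dots> = k * s / L * a2" unfolding L(2) by (simp add: field_simps)
    finally show ?thesis .
  qed
  ultimately show ?thesis by linarith
qed

text \<open>The standing hypotheses of the theorem that the proof actually uses.\<close>

locale random_matrix_model = prob_space M for M :: "'w measure" +
  fixes A :: "nat \<Rightarrow> 'w \<Rightarrow> int^'d \<Rightarrow> int^'d \<Rightarrow> real"
    and M0 :: "int^'d \<Rightarrow> real" and r :: nat
  assumes indep: "indep_vars (\<lambda>_. mat_space) (\<lambda>t. mat_of (A t)) {1..}"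
    and ident: "\<And>t. t \<ge> 1 \<Longrightarrow> distr M mat_space (mat_of (A t)) = distr M mat_space (mat_of (A 1))"
    and nonneg: "\<And>x y. AE \<omega> in M. A 1 \<omega> x y \<ge> 0"
    and cols: "indep_vars (\<lambda>_. col_space) (\<lambda>y \<omega>. (\<lambda>x. A 1 \<omega> x y)) UNIV"
    and rng: "\<And>x y. norm1 (x - y) > int r \<Longrightarrow> (AE \<omega> in M. A 1 \<omega> x y = 0)"
    and shift: "\<And>z. distr M mat_space (\<lambda>\<omega>. \<lambda>(x, y). A 1 \<omega> (x + z) (y + z))
                   = distr M mat_space (mat_of (A 1))"
    and M0_nonneg: "\<And>x. M0 x \<ge> 0"
    and M0_fin: "finite {x. M0 x > 0}"
    and cube: "\<And>y. integrable M (\<lambda>\<omega>. (A 1 \<omega> 0 y) ^ 3)"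
    and nonconst: "\<not> (\<exists>c. AE \<omega> in M. infsum (\<lambda>x. A 1 \<omega> x 0) UNIV = c)"
begin

abbreviation Y1 :: "'w \<Rightarrow> (int^'d) \<times> (int^'d) \<Rightarrow> real" where
  "Y1 \<equiv> mat_of (A 1)"

lemma mat_measurable[measurable]: "s \<ge> 1 \<Longrightarrow> mat_of (A s) \<in> measurable M mat_space"
  using indep unfolding indep_vars_def by auto

lemma entry_measurable[measurable]: "s \<ge> 1 \<Longrightarrow> (\<lambda>\<omega>. A s \<omega> x y) \<in> borel_measurable M"
proof -
  assume s: "s \<ge> 1"
  have "(\<lambda>\<omega>. mat_of (A s) \<omega> (x, y)) \<in> borel_measurable M"
    using measurable_compose[OF mat_measurable[OF s]
        measurable_component_singleton[of "(x, y)" UNIV "\<lambda>_. borel"]]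
    by (simp add: comp_def)
  then show ?thesis by (simp add: mat_of_def)
qed

lemma AE_mat_transfer:
  assumes s: "s \<ge> 1" and P: "{m \<in> space mat_space. P m} \<in> sets mat_space"
    and ae: "AE \<omega> in M. P (Y1 \<omega>)"
  shows "AE \<omega> in M. P (mat_of (A s) \<omega>)"
proof -
  have "AE m in distr M mat_space Y1. P m"
    using ae by (subst AE_distr_iff) (use P in auto)
  then have "AE m in distr M mat_space (mat_of (A s)). P m" by (subst ident[OF s])
  then show ?thesis by (subst (asm) AE_distr_iff) (use P s in auto)
qed

lemma integral_same_law:
  fixes g :: "((int^'d) \<times> (int^'d) \<Rightarrow> real) \<Rightarrow> real"
  assumes X[measurable]: "X \<in> measurable M mat_space" and Y[measurable]: "Y \<in> measurable M mat_space"
    and law: "distr M mat_space X = distr M mat_space Y"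
    and g[measurable]: "g \<in> borel_measurable mat_space"
  shows "integrable M (\<lambda>\<omega>. g (X \<omega>)) \<longleftrightarrow> integrable M (\<lambda>\<omega>. g (Y \<omega>))"
    and "(\<integral>\<omega>. g (X \<omega>) \<partial>M) = (\<integral>\<omega>. g (Y \<omega>) \<partial>M)"
proof -
  show "integrable M (\<lambda>\<omega>. g (X \<omega>)) \<longleftrightarrow> integrable M (\<lambda>\<omega>. g (Y \<omega>))"
    using integrable_distr_eq[OF X g] integrable_distr_eq[OF Y g] law by metis
  show "(\<integral>\<omega>. g (X \<omega>) \<partial>M) = (\<integral>\<omega>. g (Y \<omega>) \<partial>M)"
    using integral_distr[OF X g] integral_distr[OF Y g] law by metis
qed

lemma integral_mat_transfer:
  fixes g :: "((int^'d) \<times> (int^'d) \<Rightarrow> real) \<Rightarrow> real"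
  assumes s: "s \<ge> 1" and g: "g \<in> borel_measurable mat_space"
  shows "integrable M (\<lambda>\<omega>. g (mat_of (A s) \<omega>)) \<longleftrightarrow> integrable M (\<lambda>\<omega>. g (Y1 \<omega>))"
    and "(\<integral>\<omega>. g (mat_of (A s) \<omega>) \<partial>M) = (\<integral>\<omega>. g (Y1 \<omega>) \<partial>M)"
  using integral_same_law[OF mat_measurable[OF s] mat_measurable ident[OF s] g] by simp_all

lemma integral_mat_shift:
  fixes g :: "((int^'d) \<times> (int^'d) \<Rightarrow> real) \<Rightarrow> real"
  assumes g: "g \<in> borel_measurable mat_space"
  shows "integrable M (\<lambda>\<omega>. g (shift_mat z (Y1 \<omega>))) \<longleftrightarrow> integrable M (\<lambda>\<omega>. g (Y1 \<omega>))"
    and "(\<integral>\<omega>. g (shift_mat z (Y1 \<omega>)) \<partial>M) = (\<integral>\<omega>. g (Y1 \<omega>) \<partial>M)"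
proof -
  have "(\<lambda>\<omega>. \<lambda>(x, y). A 1 \<omega> (x + z) (y + z)) = (\<lambda>\<omega>. shift_mat z (Y1 \<omega>))"
    by (auto simp: shift_mat_def mat_of_def fun_eq_iff)
  then have law: "distr M mat_space (\<lambda>\<omega>. shift_mat z (Y1 \<omega>)) = distr M mat_space Y1"
    using shift[of z] by simp
  show "integrable M (\<lambda>\<omega>. g (shift_mat z (Y1 \<omega>))) \<longleftrightarrow> integrable M (\<lambda>\<omega>. g (Y1 \<omega>))"
    and "(\<integral>\<omega>. g (shift_mat z (Y1 \<omega>)) \<partial>M) = (\<integral>\<omega>. g (Y1 \<omega>) \<partial>M)"
    using integral_same_law[OF _ _ law g] by simp_all
qed

text \<open>A sample point is regular if every matrix is nonnegative and has range \<open>r\<close>; almost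
  every point is regular, and at regular points the dual process has finite support.\<close>

definition regular :: "'w \<Rightarrow> bool" where
  "regular \<omega> \<longleftrightarrow> (\<forall>s\<ge>1. \<forall>x y. A s \<omega> x y \<ge> 0 \<and> (norm1 (x - y) > int r \<longrightarrow> A s \<omega> x y = 0))"

lemma AE_regular: "AE \<omega> in M. regular \<omega>"
proof -
  have "AE \<omega> in M. A s \<omega> x y \<ge> 0 \<and> (norm1 (x - y) > int r \<longrightarrow> A s \<omega> x y = 0)"
    if s: "s \<ge> 1" for s x y
  proof -
    have m: "{m \<in> space mat_space. m (x, y) \<ge> (0::real)} \<in> sets mat_space"
      "{m \<in> space mat_space. m (x, y) = (0::real)} \<in> sets mat_space" by measurable
    have pos: "AE \<omega> in M. mat_of (A s) \<omega> (x, y) \<ge> 0"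
      by (rule AE_mat_transfer[OF s m(1)]) (use nonneg[of x y] in \<open>simp add: mat_of_def\<close>)
    have zero: "norm1 (x - y) > int r \<Longrightarrow> AE \<omega> in M. mat_of (A s) \<omega> (x, y) = 0"
      by (rule AE_mat_transfer[OF s m(2)]) (use rng[of x y] in \<open>simp add: mat_of_def\<close>)
    show ?thesis using pos zero by (cases "norm1 (x - y) > int r") (auto simp: mat_of_def)
  qed
  then have "\<forall>s x y. AE \<omega> in M. s \<ge> 1 \<longrightarrow> A s \<omega> x y \<ge> 0 \<and> (norm1 (x - y) > int r \<longrightarrow> A s \<omega> x y = 0)"
    by auto
  then show ?thesis unfolding regular_def by (simp add: AE_all_countable)
qed

text \<open>A finite-sum version of the dual process: \<open>Kset s\<close> contains the support of \<open>M_s\<close> at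
  every regular point, \<open>Mfin\<close>, \<open>Tfin\<close> are the corresponding finite sums, and \<open>rho_fin\<close> is the
  profile clipped to \<open>[0, 1]\<close>, which makes it bounded everywhere.\<close>

primrec Kset :: "nat \<Rightarrow> (int^'d) set" where
  "Kset 0 = {x. M0 x > 0}"
| "Kset (Suc s) = (\<lambda>p. fst p + snd p) ` (Kset s \<times> ball1 r)"

primrec Mfin :: "nat \<Rightarrow> 'w \<Rightarrow> int^'d \<Rightarrow> real" where
  "Mfin 0 \<omega> = M0"
| "Mfin (Suc s) \<omega> = (\<lambda>y. \<Sum>x\<in>Kset s. A (Suc s) \<omega> y x * Mfin s \<omega> x)"

definition Tfin :: "nat \<Rightarrow> 'w \<Rightarrow> real" where
  "Tfin s \<omega> = (\<Sum>x\<in>Kset s. Mfin s \<omega> x)"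

definition rho_fin :: "nat \<Rightarrow> 'w \<Rightarrow> int^'d \<Rightarrow> real" where
  "rho_fin s \<omega> x = max 0 (min 1 (if Tfin s \<omega> > 0 then Mfin s \<omega> x / Tfin s \<omega> else 0))"

lemma finite_Kset: "finite (Kset s)"
  by (induction s) (auto simp: M0_fin finite_ball1)

lemma rho_fin_bounds: "0 \<le> rho_fin s \<omega> x" "rho_fin s \<omega> x \<le> 1"
  by (auto simp: rho_fin_def)

lemma rho_fin_zero: "\<not> Tfin s \<omega> > 0 \<Longrightarrow> rho_fin s \<omega> x = 0"
  by (simp add: rho_fin_def)

lemma regular_Mfin:
  assumes reg: "regular \<omega>"
  shows "Mfin s \<omega> x \<ge> 0 \<and> (x \<notin> Kset s \<longrightarrow> Mfin s \<omega> x = 0)"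
proof (induction s arbitrary: x)
  case 0
  then show ?case using M0_nonneg[of x] by auto
next
  case (Suc s)
  have pos: "A (Suc s) \<omega> y z \<ge> 0" for y z using reg unfolding regular_def by auto
  have "Mfin (Suc s) \<omega> x \<ge> 0"
    using Suc.IH pos by (auto intro!: sum_nonneg)
  moreover have "Mfin (Suc s) \<omega> x = 0" if nx: "x \<notin> Kset (Suc s)"
  proof -
    have "A (Suc s) \<omega> x z = 0" if z: "z \<in> Kset s" for z
    proof -
      have "x - z \<notin> ball1 r"
      proof
        assume "x - z \<in> ball1 r"
        then have "x \<in> (\<lambda>p. fst p + snd p) ` (Kset s \<times> ball1 r)"
          using z by (intro image_eqI[of _ _ "(z, x - z)"]) auto
        then show False using nx by simp
      qed
      then show ?thesis using reg unfolding regular_def ball1_def by auto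
    qed
    then show ?thesis by simp
  qed
  ultimately show ?case by blast
qed

lemma regular_dualM:
  assumes reg: "regular \<omega>"
  shows "dualM A M0 s \<omega> = Mfin s \<omega>"
proof (induction s)
  case 0
  then show ?case by simp
next
  case (Suc s)
  show ?case
  proof
    fix y
    have "dualM A M0 (Suc s) \<omega> y = infsum (\<lambda>x. A (Suc s) \<omega> y x * Mfin s \<omega> x) UNIV"
      using Suc.IH by simp
    also have "\<dots> = (\<Sum>x\<in>Kset s. A (Suc s) \<omega> y x * Mfin s \<omega> x)"
      by (rule infsum_finite_support) (use finite_Kset regular_Mfin[OF reg] in auto)
    finally show "dualM A M0 (Suc s) \<omega> y = Mfin (Suc s) \<omega> y" by simp
  qed
qed

lemma regular_totM:
  assumes reg: "regular \<omega>"
  shows "totM A M0 s \<omega> = Tfin s \<omega>"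
  unfolding totM_def Tfin_def regular_dualM[OF reg]
  by (rule infsum_finite_support) (use finite_Kset regular_Mfin[OF reg] in auto)

text \<open>At regular points the clipping is inactive, so \<open>rho_fin\<close> is the profile \<open>rho*\<close>.\<close>

lemma regular_rho_star:
  assumes reg: "regular \<omega>"
  shows "rho_star A M0 s \<omega> x = rho_fin s \<omega> x"
proof (cases "Tfin s \<omega> > 0")
  case True
  have "Mfin s \<omega> x \<le> Tfin s \<omega>"
  proof (cases "x \<in> Kset s")
    case True
    then show ?thesis unfolding Tfin_def
      by (rule member_le_sum) (use finite_Kset regular_Mfin[OF reg] in auto)
  next
    case False
    then show ?thesis using regular_Mfin[OF reg, of s x] \<open>Tfin s \<omega> > 0\<close> by simp
  qed
  then show ?thesis using True regular_Mfin[OF reg, of s x]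
    by (simp add: rho_star_def rho_fin_def regular_totM[OF reg] regular_dualM[OF reg])
next
  case False
  then show ?thesis by (simp add: rho_star_def rho_fin_def regular_totM[OF reg])
qed

lemma regular_rho_fin_outside: "regular \<omega> \<Longrightarrow> x \<notin> Kset s \<Longrightarrow> rho_fin s \<omega> x = 0"
  using regular_Mfin[of \<omega> s x] by (simp add: rho_fin_def)

lemma regular_rho_fin_sum:
  assumes reg: "regular \<omega>" and T: "Tfin s \<omega> > 0"
  shows "(\<Sum>x\<in>Kset s. rho_fin s \<omega> x) = 1"
proof -
  have "(\<Sum>x\<in>Kset s. rho_fin s \<omega> x) = (\<Sum>x\<in>Kset s. Mfin s \<omega> x / Tfin s \<omega>)"
    using T by (intro sum.cong) (simp_all add: regular_rho_star[OF reg, symmetric] rho_star_def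
        regular_totM[OF reg] regular_dualM[OF reg])
  also have "\<dots> = Tfin s \<omega> / Tfin s \<omega>" unfolding Tfin_def by (rule sum_divide_distrib[symmetric])
  finally show ?thesis using T by simp
qed

definition filt_gens :: "nat \<Rightarrow> 'w set set" where
  "filt_gens s = {(\<lambda>\<omega>. A s' \<omega> x y) -` B \<inter> space M | s' x y B. s' \<in> {1..s} \<and> B \<in> sets borel}"

lemma filt_gens_Pow: "filt_gens s \<subseteq> Pow (space M)"
  unfolding filt_gens_def by auto

lemma space_filt: "space (filt M A s) = space M"
  unfolding filt_def using filt_gens_Pow[of s] unfolding filt_gens_def by (intro space_measure_of) auto

lemma sets_filt: "sets (filt M A s) = sigma_sets (space M) (filt_gens s)"
  unfolding filt_def filt_gens_def using filt_gens_Pow[of s] unfolding filt_gens_def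
  by (intro sets_measure_of) auto

lemma filt_entry_measurable[measurable]:
  assumes "1 \<le> s'" "s' \<le> s"
  shows "(\<lambda>\<omega>. A s' \<omega> x y) \<in> borel_measurable (filt M A s)"
proof (rule measurableI)
  fix B :: "real set" assume "B \<in> sets borel"
  then have "(\<lambda>\<omega>. A s' \<omega> x y) -` B \<inter> space M \<in> filt_gens s"
    unfolding filt_gens_def using assms
    by (intro CollectI exI[of _ s'] exI[of _ x] exI[of _ y] exI[of _ B]) auto
  then show "(\<lambda>\<omega>. A s' \<omega> x y) -` B \<inter> space (filt M A s) \<in> sets (filt M A s)"
    unfolding sets_filt space_filt by (rule sigma_sets.Basic)
qed auto

lemma subalgebra_filt: "subalgebra M (filt M A s)"
  unfolding subalgebra_def space_filt sets_filt
proof (intro conjI refl sets.sigma_sets_subset subsetI)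
  fix G assume "G \<in> filt_gens s"
  then obtain s' x y B where G: "G = (\<lambda>\<omega>. A s' \<omega> x y) -` B \<inter> space M" "s' \<in> {1..s}" "B \<in> sets borel"
    unfolding filt_gens_def by blast
  then show "G \<in> sets M" using measurable_sets[OF entry_measurable[of s' x y] G(3)] by auto
qed

lemma filt_mono_measurable:
  assumes "s \<le> s'" "f \<in> borel_measurable (filt M A s)"
  shows "f \<in> borel_measurable (filt M A s')"
proof (rule measurable_from_subalg[OF _ assms(2)])
  have "filt_gens s \<subseteq> filt_gens s'"
  proof
    fix G assume "G \<in> filt_gens s"
    then obtain s'' x y B where G: "G = (\<lambda>\<omega>. A s'' \<omega> x y) -` B \<inter> space M" "s'' \<in> {1..s}" "B \<in> sets borel"
      unfolding filt_gens_def by blast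
    then show "G \<in> filt_gens s'" unfolding filt_gens_def using assms(1)
      by (intro CollectI exI[of _ s''] exI[of _ x] exI[of _ y] exI[of _ B]) auto
  qed
  then show "subalgebra (filt M A s') (filt M A s)"
    unfolding subalgebra_def space_filt sets_filt
    using sigma_sets_mono'[of "filt_gens s" "filt_gens s'" "space M"] by simp
qed

lemma Mfin_filt_measurable[measurable]: "(\<lambda>\<omega>. Mfin s \<omega> y) \<in> borel_measurable (filt M A s)"
proof (induction s arbitrary: y)
  case 0
  then show ?case by simp
next
  case (Suc s)
  have [measurable]: "(\<lambda>\<omega>. Mfin s \<omega> x) \<in> borel_measurable (filt M A (Suc s))" for x
    by (rule filt_mono_measurable[OF _ Suc.IH]) simp
  have [measurable]: "(\<lambda>\<omega>. A (Suc s) \<omega> y x) \<in> borel_measurable (filt M A (Suc s))" for x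
    by (rule filt_entry_measurable) auto
  show ?case by simp
qed

lemma Tfin_filt_measurable[measurable]: "Tfin s \<in> borel_measurable (filt M A s)"
  unfolding Tfin_def[abs_def] by measurable

lemma rho_fin_filt_measurable[measurable]: "(\<lambda>\<omega>. rho_fin s \<omega> x) \<in> borel_measurable (filt M A s)"
  unfolding rho_fin_def by measurable

lemma dualM_measurable[measurable]: "(\<lambda>\<omega>. dualM A M0 s \<omega> y) \<in> borel_measurable M"
proof (induction s arbitrary: y)
  case 0
  then show ?case by simp
next
  case (Suc s)
  have "(\<lambda>\<omega>. infsum (\<lambda>x. A (Suc s) \<omega> y x * dualM A M0 s \<omega> x) UNIV) \<in> borel_measurable M"
    by (rule borel_measurable_infsum_countable[OF infinite_vec_int]) (use Suc.IH in simp)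
  then show ?case by simp
qed

lemma V_t_measurable[measurable]:
  assumes t: "t \<ge> 1"
  shows "V_t M A M0 t \<in> borel_measurable M"
proof -
  have [measurable]: "totM A M0 s \<in> borel_measurable M" for s
    unfolding totM_def[abs_def]
    by (rule borel_measurable_infsum_countable[OF infinite_vec_int]) simp
  have [measurable]: "(\<lambda>\<omega>. A t \<omega> x y) \<in> borel_measurable M" for x y using t by simp
  have "(\<lambda>\<omega>. infsum (\<lambda>p. (\<lambda>(x, y). rho_star A M0 (t - 1) \<omega> y * A t \<omega> x y) p) UNIV)
      \<in> borel_measurable M"
    by (rule borel_measurable_infsum_countable)
       (simp_all add: finite_prod infinite_vec_int split_beta rho_star_def)
  then show ?thesis unfolding V_t_def[abs_def] by simp
qed

definition events_of :: "nat \<Rightarrow> 'w set set" where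
  "events_of s = {mat_of (A s) -` C \<inter> space M | C. C \<in> sets mat_space}"

lemma events_of_Int_stable: "Int_stable (events_of s)"
  unfolding Int_stable_def events_of_def
proof (intro ballI)
  fix a b assume "a \<in> {mat_of (A s) -` C \<inter> space M |C. C \<in> sets mat_space}"
    "b \<in> {mat_of (A s) -` C \<inter> space M |C. C \<in> sets mat_space}"
  then obtain C1 C2 where "a = mat_of (A s) -` C1 \<inter> space M" "C1 \<in> sets mat_space"
    "b = mat_of (A s) -` C2 \<inter> space M" "C2 \<in> sets mat_space" by blast
  then show "a \<inter> b \<in> {mat_of (A s) -` C \<inter> space M |C. C \<in> sets mat_space}"
    by (intro CollectI exI[of _ "C1 \<inter> C2"]) auto
qed

lemma filt_gens_events_of:
  assumes "G \<in> filt_gens s"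
  shows "\<exists>s'\<in>{1..s}. G \<in> events_of s'"
proof -
  obtain s' x y B where G: "G = (\<lambda>\<omega>. A s' \<omega> x y) -` B \<inter> space M" "s' \<in> {1..s}" "B \<in> sets borel"
    using assms unfolding filt_gens_def by blast
  have C: "(\<lambda>m. m (x, y)) -` B \<inter> space mat_space \<in> sets mat_space"
    using measurable_sets[OF measurable_component_singleton[of "(x,y)" UNIV "\<lambda>_. (borel :: real measure)"] G(3)]
    by simp
  have "G = mat_of (A s') -` ((\<lambda>m. m (x, y)) -` B \<inter> space mat_space) \<inter> space M"
    using G(1) by (auto simp: mat_of_def space_PiM)
  then show ?thesis using G(2) C unfolding events_of_def by blast
qed

lemma indep_past_present:
  assumes t: "t \<ge> 1"
  shows "indep_set (sets (filt M A (t - 1))) (sigma_sets (space M) (events_of t))"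
proof -
  have i0: "indep_sets events_of {1..}" using indep unfolding indep_vars_def2 events_of_def by blast
  define I where "I = (\<lambda>b::bool. if b then {1..<t} else {t})"
  have "indep_sets events_of (\<Union>j. I j)"
    by (rule indep_sets_mono_index[OF _ i0]) (use t in \<open>auto simp: I_def\<close>)
  then have i1: "indep_sets (\<lambda>j. sigma_sets (space M) (\<Union>i\<in>I j. events_of i)) UNIV"
    by (intro indep_sets_collect_sigma events_of_Int_stable) (auto simp: I_def disjoint_family_on_def)
  show ?thesis
    unfolding indep_set_def
  proof (rule indep_sets_mono_sets[OF i1])
    fix j :: bool
    show "case_bool (sets (filt M A (t - 1))) (sigma_sets (space M) (events_of t)) j
          \<subseteq> sigma_sets (space M) (\<Union>i\<in>I j. events_of i)"
    proof (cases j)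
      case True
      have "filt_gens (t - 1) \<subseteq> (\<Union>i\<in>{1..<t}. events_of i)"
      proof
        fix G assume "G \<in> filt_gens (t - 1)"
        then obtain s' where "s' \<in> {1..t-1}" "G \<in> events_of s'" using filt_gens_events_of by blast
        then show "G \<in> (\<Union>i\<in>{1..<t}. events_of i)" using t by auto
      qed
      then show ?thesis using True unfolding sets_filt I_def by (simp add: sigma_sets_subseteq)
    next
      case False
      then show ?thesis by (simp add: I_def)
    qed
  qed
qed

lemma indep_product:
  fixes g :: "((int^'d) \<times> (int^'d) \<Rightarrow> real) \<Rightarrow> real"
  assumes t: "t \<ge> 1" and Phi: "Phi \<in> borel_measurable (filt M A (t - 1))" and B: "\<And>\<omega>. \<bar>Phi \<omega>\<bar> \<le> B"
    and g[measurable]: "g \<in> borel_measurable mat_space" and gi: "integrable M (\<lambda>\<omega>. g (mat_of (A t) \<omega>))"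
  shows "integrable M (\<lambda>\<omega>. Phi \<omega> * g (mat_of (A t) \<omega>))"
    and "(\<integral>\<omega>. Phi \<omega> * g (mat_of (A t) \<omega>) \<partial>M) = (\<integral>\<omega>. Phi \<omega> \<partial>M) * (\<integral>\<omega>. g (mat_of (A t) \<omega>) \<partial>M)"
proof -
  have PhiM[measurable]: "Phi \<in> borel_measurable M" by (rule measurable_from_subalg[OF subalgebra_filt Phi])
  have gM[measurable]: "(\<lambda>\<omega>. g (mat_of (A t) \<omega>)) \<in> borel_measurable M" using t by simp
  have PhiI: "integrable M Phi" by (rule integrable_const_bound[of _ B]) (use B in auto)
  have "indep_var borel Phi borel (\<lambda>\<omega>. g (mat_of (A t) \<omega>))"
    unfolding indep_var_eq
  proof (intro conjI PhiM gM)
    have past: "sigma_sets (space M) {Phi -` X \<inter> space M |X. X \<in> sets borel} \<subseteq> sets (filt M A (t - 1))"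
    proof -
      have "{Phi -` X \<inter> space M |X. X \<in> sets borel} \<subseteq> sets (filt M A (t - 1))"
        using measurable_sets[OF Phi] unfolding space_filt by blast
      from sets.sigma_sets_subset[OF this] show ?thesis unfolding space_filt .
    qed
    have present: "sigma_sets (space M) {(\<lambda>\<omega>. g (mat_of (A t) \<omega>)) -` X \<inter> space M |X. X \<in> sets borel}
       \<subseteq> sigma_sets (space M) (events_of t)"
    proof (rule sigma_sets_subseteq, safe)
      fix X :: "real set" assume X: "X \<in> sets borel"
      have "g -` X \<inter> space mat_space \<in> sets mat_space" using measurable_sets[OF g X] .
      moreover have "(\<lambda>\<omega>. g (mat_of (A t) \<omega>)) -` X \<inter> space M
          = mat_of (A t) -` (g -` X \<inter> space mat_space) \<inter> space M"
        by (auto simp: space_PiM)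
      ultimately show "(\<lambda>\<omega>. g (mat_of (A t) \<omega>)) -` X \<inter> space M \<in> events_of t"
        unfolding events_of_def by blast
    qed
    show "indep_set (sigma_sets (space M) {Phi -` X \<inter> space M |X. X \<in> sets borel})
        (sigma_sets (space M) {(\<lambda>\<omega>. g (mat_of (A t) \<omega>)) -` X \<inter> space M |X. X \<in> sets borel})"
      using indep_past_present[OF t] unfolding indep_set_def
      by (rule indep_sets_mono_sets) (use past present in \<open>auto split: bool.split\<close>)
  qed
  then show "integrable M (\<lambda>\<omega>. Phi \<omega> * g (mat_of (A t) \<omega>))"
    and "(\<integral>\<omega>. Phi \<omega> * g (mat_of (A t) \<omega>) \<partial>M) = (\<integral>\<omega>. Phi \<omega> \<partial>M) * (\<integral>\<omega>. g (mat_of (A t) \<omega>) \<partial>M)"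
    using indep_var_integrable indep_var_lebesgue_integral PhiI gi by blast+
qed

lemma cond_exp_indep_product:
  fixes g :: "((int^'d) \<times> (int^'d) \<Rightarrow> real) \<Rightarrow> real"
  assumes t: "t \<ge> 1" and Phi[measurable]: "Phi \<in> borel_measurable (filt M A (t - 1))" and B: "\<And>\<omega>. \<bar>Phi \<omega>\<bar> \<le> B"
    and g[measurable]: "g \<in> borel_measurable mat_space" and gi: "integrable M (\<lambda>\<omega>. g (mat_of (A t) \<omega>))"
  shows "AE \<omega> in M. real_cond_exp M (filt M A (t - 1)) (\<lambda>\<omega>. Phi \<omega> * g (mat_of (A t) \<omega>)) \<omega>
           = Phi \<omega> * (\<integral>\<omega>. g (mat_of (A t) \<omega>) \<partial>M)"
proof -
  interpret S: finite_measure_subalgebra M "filt M A (t - 1)"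
    by unfold_locales (rule subalgebra_filt)
  have PhiM[measurable]: "Phi \<in> borel_measurable M" by (rule measurable_from_subalg[OF subalgebra_filt Phi])
  have PhiI: "integrable M Phi" by (rule integrable_const_bound[of _ B]) (use B in auto)
  define mu where "mu = (\<integral>\<omega>. g (mat_of (A t) \<omega>) \<partial>M)"
  show ?thesis unfolding mu_def[symmetric]
  proof (rule S.real_cond_exp_charact)
    fix G assume G: "G \<in> sets (filt M A (t - 1))"
    have PG[measurable]: "(\<lambda>\<omega>. indicator G \<omega> * Phi \<omega>) \<in> borel_measurable (filt M A (t - 1))"
      using G by measurable
    have BG: "\<bar>indicator G \<omega> * Phi \<omega>\<bar> \<le> \<bar>B\<bar>" for \<omega>
      using B[of \<omega>] by (auto simp: indicator_def)
    have "(\<integral>\<omega>\<in>G. Phi \<omega> * g (mat_of (A t) \<omega>) \<partial>M) = (\<integral>\<omega>. (indicator G \<omega> * Phi \<omega>) * g (mat_of (A t) \<omega>) \<partial>M)"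
      unfolding set_lebesgue_integral_def by (simp add: mult.assoc)
    also have "\<dots> = (\<integral>\<omega>. indicator G \<omega> * Phi \<omega> \<partial>M) * mu"
      unfolding mu_def by (rule indep_product(2)[OF t PG BG g gi])
    also have "\<dots> = (\<integral>\<omega>\<in>G. Phi \<omega> * mu \<partial>M)"
      unfolding set_lebesgue_integral_def by (simp add: mult.assoc[symmetric])
    finally show "(\<integral>\<omega>\<in>G. Phi \<omega> * g (mat_of (A t) \<omega>) \<partial>M) = (\<integral>\<omega>\<in>G. Phi \<omega> * mu \<partial>M)" .
  next
    show "integrable M (\<lambda>\<omega>. Phi \<omega> * g (mat_of (A t) \<omega>))" by (rule indep_product(1)[OF t Phi B g gi])
    show "integrable M (\<lambda>\<omega>. Phi \<omega> * mu)" using PhiI by simp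
    show "(\<lambda>\<omega>. Phi \<omega> * mu) \<in> borel_measurable (filt M A (t - 1))" by measurable
  qed
qed

lemma cond_exp_indep_sum:
  fixes g :: "'i \<Rightarrow> ((int^'d) \<times> (int^'d) \<Rightarrow> real) \<Rightarrow> real" and Phi :: "'i \<Rightarrow> 'w \<Rightarrow> real"
  assumes t: "t \<ge> 1" and I: "finite I"
    and Phi: "\<And>i. Phi i \<in> borel_measurable (filt M A (t - 1))" and B: "\<And>i \<omega>. \<bar>Phi i \<omega>\<bar> \<le> 1"
    and g: "\<And>i. g i \<in> borel_measurable mat_space" and gi: "\<And>i. integrable M (\<lambda>\<omega>. g i (mat_of (A t) \<omega>))"
  shows "integrable M (\<lambda>\<omega>. \<Sum>i\<in>I. Phi i \<omega> * g i (mat_of (A t) \<omega>))"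
    and "AE \<omega> in M. real_cond_exp M (filt M A (t - 1)) (\<lambda>\<omega>. \<Sum>i\<in>I. Phi i \<omega> * g i (mat_of (A t) \<omega>)) \<omega>
            = (\<Sum>i\<in>I. Phi i \<omega> * (\<integral>\<omega>. g i (mat_of (A t) \<omega>) \<partial>M))"
proof -
  interpret S: finite_measure_subalgebra M "filt M A (t - 1)"
    by unfold_locales (rule subalgebra_filt)
  have int: "integrable M (\<lambda>\<omega>. Phi i \<omega> * g i (mat_of (A t) \<omega>))" for i
    by (rule indep_product(1)[OF t Phi B g gi])
  show "integrable M (\<lambda>\<omega>. \<Sum>i\<in>I. Phi i \<omega> * g i (mat_of (A t) \<omega>))"
    by (rule Bochner_Integration.integrable_sum) (rule int)
  have sum: "AE \<omega> in M. real_cond_exp M (filt M A (t - 1)) (\<lambda>\<omega>. \<Sum>i\<in>I. Phi i \<omega> * g i (mat_of (A t) \<omega>)) \<omega>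
     = (\<Sum>i\<in>I. real_cond_exp M (filt M A (t - 1)) (\<lambda>\<omega>. Phi i \<omega> * g i (mat_of (A t) \<omega>)) \<omega>)"
    by (rule S.real_cond_exp_sum) (rule int)
  have each: "AE \<omega> in M. \<forall>i\<in>I. real_cond_exp M (filt M A (t - 1)) (\<lambda>\<omega>. Phi i \<omega> * g i (mat_of (A t) \<omega>)) \<omega>
     = Phi i \<omega> * (\<integral>\<omega>. g i (mat_of (A t) \<omega>) \<partial>M)"
    by (rule AE_finite_allI[OF I]) (rule cond_exp_indep_product[OF t Phi B g gi])
  show "AE \<omega> in M. real_cond_exp M (filt M A (t - 1)) (\<lambda>\<omega>. \<Sum>i\<in>I. Phi i \<omega> * g i (mat_of (A t) \<omega>)) \<omega>
            = (\<Sum>i\<in>I. Phi i \<omega> * (\<integral>\<omega>. g i (mat_of (A t) \<omega>) \<partial>M))"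
    using sum each by eventually_elim simp
qed

text \<open>Column sums and their normalized fluctuations
  \<open>xi y m = (\<Sum>\<^sub>x m (x, y)) / |a| - 1\<close>; by finite range only the rows \<open>y + B_r\<close> contribute.
  \<open>colf\<close> expresses \<open>xi\<close> as a function of the \<open>y\<close>-th column alone.\<close>

definition a_tot :: real where
  "a_tot = abs_a M A"

definition colsum :: "int^'d \<Rightarrow> ((int^'d) \<times> (int^'d) \<Rightarrow> real) \<Rightarrow> real" where
  "colsum y m = (\<Sum>u\<in>ball1 r. m (y + u, y))"

definition xi :: "int^'d \<Rightarrow> ((int^'d) \<times> (int^'d) \<Rightarrow> real) \<Rightarrow> real" where
  "xi y m = colsum y m / a_tot - 1"

definition colf :: "int^'d \<Rightarrow> (int^'d \<Rightarrow> real) \<Rightarrow> real" where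
  "colf y c = (\<Sum>u\<in>ball1 r. c (y + u)) / a_tot - 1"

lemma xi_colf: "xi y m = colf y (\<lambda>x. m (x, y))"
  by (simp add: xi_def colf_def colsum_def)

lemma colsum_measurable[measurable]: "colsum y \<in> borel_measurable mat_space"
  unfolding colsum_def[abs_def] by measurable

lemma xi_measurable[measurable]: "xi y \<in> borel_measurable mat_space"
  unfolding xi_def[abs_def] by measurable

lemma colf_measurable[measurable]: "colf y \<in> borel_measurable col_space"
  unfolding colf_def[abs_def] by measurable

lemma xi_shift: "xi 0 (shift_mat a m) = xi a m"
  by (simp add: xi_def colsum_def shift_mat_def add.commute)

text \<open>They are closed under finite
  linear combinations, and products of up to three of them are integrable; this is where
  the hypothesis \<open>P[A_{1,0,y}^3] < \<infinity>\<close> enters.\<close>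

definition L3 :: "('w \<Rightarrow> real) \<Rightarrow> bool" where
  "L3 f \<longleftrightarrow> f \<in> borel_measurable M \<and> integrable M (\<lambda>\<omega>. \<bar>f \<omega>\<bar> ^ 3)"

lemma L3_const: "L3 (\<lambda>_. c)"
  unfolding L3_def by simp

lemma L3_add:
  assumes "L3 f" "L3 g"
  shows "L3 (\<lambda>\<omega>. f \<omega> + g \<omega>)"
  unfolding L3_def
proof
  show m: "(\<lambda>\<omega>. f \<omega> + g \<omega>) \<in> borel_measurable M" using assms unfolding L3_def by auto
  have i: "integrable M (\<lambda>\<omega>. 4 * (\<bar>f \<omega>\<bar> ^ 3 + \<bar>g \<omega>\<bar> ^ 3))" using assms unfolding L3_def by auto
  show "integrable M (\<lambda>\<omega>. \<bar>f \<omega> + g \<omega>\<bar> ^ 3)"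
  proof (rule Bochner_Integration.integrable_bound[OF i])
    show "(\<lambda>\<omega>. \<bar>f \<omega> + g \<omega>\<bar> ^ 3) \<in> borel_measurable M" using m by measurable
    show "AE \<omega> in M. norm (\<bar>f \<omega> + g \<omega>\<bar> ^ 3) \<le> norm (4 * (\<bar>f \<omega>\<bar> ^ 3 + \<bar>g \<omega>\<bar> ^ 3))"
    proof (intro AE_I2)
      fix \<omega>
      have "\<bar>f \<omega> + g \<omega>\<bar> ^ 3 \<le> (\<bar>f \<omega>\<bar> + \<bar>g \<omega>\<bar>) ^ 3" by (intro power_mono abs_triangle_ineq) simp
      also have "\<dots> \<le> 4 * (\<bar>f \<omega>\<bar> ^ 3 + \<bar>g \<omega>\<bar> ^ 3)" by (rule cube_of_sum_le) auto
      finally show "norm (\<bar>f \<omega> + g \<omega>\<bar> ^ 3) \<le> norm (4 * (\<bar>f \<omega>\<bar> ^ 3 + \<bar>g \<omega>\<bar> ^ 3))" by simp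
    qed
  qed
qed

lemma L3_cmult: "L3 f \<Longrightarrow> L3 (\<lambda>\<omega>. c * f \<omega>)"
  unfolding L3_def by (auto simp: abs_mult power_mult_distrib)

lemma L3_sum: "(\<And>i. i \<in> I \<Longrightarrow> L3 (f i)) \<Longrightarrow> L3 (\<lambda>\<omega>. \<Sum>i\<in>I. f i \<omega>)"
proof (induction I rule: infinite_finite_induct)
  case (insert i I)
  then show ?case by (simp add: L3_add)
qed (simp_all add: L3_const)

lemma L3_integrable: "L3 f \<Longrightarrow> integrable M f"
proof -
  assume f: "L3 f"
  have i: "integrable M (\<lambda>\<omega>. \<bar>f \<omega>\<bar> ^ 3 + 1)" using f unfolding L3_def by auto
  show ?thesis
    by (rule Bochner_Integration.integrable_bound[OF i])
       (use f abs_le_cube_plus_one in \<open>auto simp: L3_def\<close>)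
qed

lemma L3_integrable_prod2: "L3 f \<Longrightarrow> L3 g \<Longrightarrow> integrable M (\<lambda>\<omega>. f \<omega> * g \<omega>)"
proof -
  assume fg: "L3 f" "L3 g"
  have i: "integrable M (\<lambda>\<omega>. \<bar>f \<omega>\<bar> ^ 3 + \<bar>g \<omega>\<bar> ^ 3 + 1)" using fg unfolding L3_def by auto
  show ?thesis
    by (rule Bochner_Integration.integrable_bound[OF i])
       (use fg abs_prod_le_sum_cubes in \<open>auto simp: L3_def\<close>)
qed

lemma L3_integrable_prod3: "L3 f \<Longrightarrow> L3 g \<Longrightarrow> L3 k \<Longrightarrow> integrable M (\<lambda>\<omega>. f \<omega> * g \<omega> * k \<omega>)"
proof -
  assume fgk: "L3 f" "L3 g" "L3 k"
  have i: "integrable M (\<lambda>\<omega>. \<bar>f \<omega>\<bar> ^ 3 + \<bar>g \<omega>\<bar> ^ 3 + \<bar>k \<omega>\<bar> ^ 3)" using fgk unfolding L3_def by auto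
  have b: "\<bar>f \<omega> * g \<omega> * k \<omega>\<bar> \<le> \<bar>f \<omega>\<bar> ^ 3 + \<bar>g \<omega>\<bar> ^ 3 + \<bar>k \<omega>\<bar> ^ 3" for \<omega>
    using prod3_le_sum_cubes[of "\<bar>f \<omega>\<bar>" "\<bar>g \<omega>\<bar>" "\<bar>k \<omega>\<bar>"] by (simp add: abs_mult)
  show ?thesis
    by (rule Bochner_Integration.integrable_bound[OF i]) (use fgk b in \<open>auto simp: L3_def\<close>)
qed

text \<open>By shift invariance every entry of \<open>A_1\<close>, hence every fluctuation \<open>xi y\<close>, has a
  finite third moment.\<close>

lemma L3_entry: "L3 (\<lambda>\<omega>. A 1 \<omega> x y)"
  unfolding L3_def
proof
  show "(\<lambda>\<omega>. A 1 \<omega> x y) \<in> borel_measurable M" by simp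
  define g where "g = (\<lambda>m::((int^'d) \<times> (int^'d) \<Rightarrow> real). \<bar>m (0, y - x)\<bar> ^ 3)"
  have g[measurable]: "g \<in> borel_measurable mat_space" unfolding g_def by measurable
  have "integrable M (\<lambda>\<omega>. \<bar>(A 1 \<omega> 0 (y - x)) ^ 3\<bar>)" using cube[of "y - x"] by (rule integrable_abs)
  then have "integrable M (\<lambda>\<omega>. g (Y1 \<omega>))" by (simp add: g_def mat_of_def power_abs)
  then have "integrable M (\<lambda>\<omega>. g (shift_mat x (Y1 \<omega>)))" using integral_mat_shift(1)[OF g, of x] by simp
  then show "integrable M (\<lambda>\<omega>. \<bar>A 1 \<omega> x y\<bar> ^ 3)" by (simp add: g_def shift_mat_def mat_of_def)
qed

lemma L3_xi: "L3 (\<lambda>\<omega>. xi y (Y1 \<omega>))"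
proof -
  have "L3 (\<lambda>\<omega>. (1 / a_tot) * (\<Sum>u\<in>ball1 r. A 1 \<omega> (y + u) y) + (-1))"
    by (intro L3_add L3_cmult L3_sum L3_entry L3_const)
  then show ?thesis by (simp add: xi_def colsum_def mat_of_def)
qed

lemma colsum_integrable: "integrable M (\<lambda>\<omega>. colsum a (Y1 \<omega>))"
  unfolding colsum_def mat_of_def prod.case
  by (rule Bochner_Integration.integrable_sum, rule L3_integrable, rule L3_entry)

text \<open>The expected column sum is \<open>|a|\<close>, and \<open>|a| > 0\<close> because the column sum is
  nonnegative and not almost surely constant.\<close>

lemma integral_entry: "(\<integral>\<omega>. A 1 \<omega> (a + u) a \<partial>M) = mean_a M A (- u)"
proof -
  define g1 where "g1 = (\<lambda>m::((int^'d) \<times> (int^'d) \<Rightarrow> real). m (u, 0))"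
  define g2 where "g2 = (\<lambda>m::((int^'d) \<times> (int^'d) \<Rightarrow> real). m (0, - u))"
  have [measurable]: "g1 \<in> borel_measurable mat_space" "g2 \<in> borel_measurable mat_space"
    unfolding g1_def g2_def by measurable
  have "(\<integral>\<omega>. A 1 \<omega> (a + u) a \<partial>M) = (\<integral>\<omega>. g1 (shift_mat a (Y1 \<omega>)) \<partial>M)"
    by (simp add: g1_def shift_mat_def mat_of_def add.commute)
  also have "\<dots> = (\<integral>\<omega>. g1 (Y1 \<omega>) \<partial>M)" by (rule integral_mat_shift(2)) simp
  also have "\<dots> = (\<integral>\<omega>. g2 (shift_mat u (Y1 \<omega>)) \<partial>M)"
    by (simp add: g1_def g2_def shift_mat_def mat_of_def)
  also have "\<dots> = (\<integral>\<omega>. g2 (Y1 \<omega>) \<partial>M)" by (rule integral_mat_shift(2)) simp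
  also have "\<dots> = mean_a M A (- u)" by (simp add: g2_def mat_of_def mean_a_def)
  finally show ?thesis .
qed

lemma a_tot_eq: "a_tot = (\<Sum>v\<in>ball1 r. mean_a M A v)"
proof -
  have "mean_a M A v = 0" if "v \<notin> ball1 r" for v
    unfolding mean_a_def using that
    by (intro integral_eq_zero_AE rng) (simp add: ball1_def norm1_uminus)
  then show ?thesis
    unfolding a_tot_def abs_a_def by (intro infsum_finite_support finite_ball1) auto
qed

lemma integral_colsum: "(\<integral>\<omega>. colsum a (Y1 \<omega>) \<partial>M) = a_tot"
proof -
  have "(\<integral>\<omega>. colsum a (Y1 \<omega>) \<partial>M) = (\<Sum>u\<in>ball1 r. (\<integral>\<omega>. A 1 \<omega> (a + u) a \<partial>M))"
    unfolding colsum_def mat_of_def prod.case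
    by (rule Bochner_Integration.integral_sum) (rule L3_integrable[OF L3_entry])
  also have "\<dots> = (\<Sum>u\<in>ball1 r. mean_a M A (- u))" by (rule sum.cong[OF refl integral_entry])
  also have "\<dots> = (\<Sum>v\<in>uminus ` ball1 r. mean_a M A v)"
    by (subst sum.reindex) (auto simp: comp_def)
  also have "\<dots> = a_tot" by (simp add: uminus_ball1 a_tot_eq)
  finally show ?thesis .
qed

lemma AE_infsum_column: "AE \<omega> in M. infsum (\<lambda>x. A 1 \<omega> x 0) UNIV = colsum 0 (Y1 \<omega>)"
proof -
  have "AE \<omega> in M. \<forall>x. x \<notin> ball1 r \<longrightarrow> A 1 \<omega> x 0 = 0"
    unfolding AE_all_countable
    by (intro allI, case_tac "x \<in> ball1 r") (use rng in \<open>auto simp: ball1_def\<close>)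
  then show ?thesis
  proof eventually_elim
    case (elim \<omega>)
    have "infsum (\<lambda>x. A 1 \<omega> x 0) UNIV = (\<Sum>x\<in>ball1 r. A 1 \<omega> x 0)"
      by (rule infsum_finite_support) (use finite_ball1 elim in auto)
    then show ?case by (simp add: colsum_def mat_of_def)
  qed
qed

lemma a_tot_pos: "a_tot > 0"
proof -
  have "AE \<omega> in M. \<forall>x y. A 1 \<omega> x y \<ge> 0" using nonneg by (simp add: AE_all_countable)
  then have nn: "AE \<omega> in M. 0 \<le> colsum 0 (Y1 \<omega>)"
    by eventually_elim (auto simp: colsum_def mat_of_def intro: sum_nonneg)
  have "a_tot \<ge> 0" using integral_nonneg_AE[OF nn] integral_colsum by simp
  moreover have "a_tot \<noteq> 0"
  proof
    assume "a_tot = 0"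
    then have "AE \<omega> in M. colsum 0 (Y1 \<omega>) = 0"
      using integral_nonneg_eq_0_iff_AE[OF colsum_integrable nn] integral_colsum by simp
    then have "AE \<omega> in M. infsum (\<lambda>x. A 1 \<omega> x 0) UNIV = 0"
      using AE_infsum_column by eventually_elim simp
    then show False using nonconst by blast
  qed
  ultimately show ?thesis by simp
qed

lemma integral_xi: "(\<integral>\<omega>. xi a (Y1 \<omega>) \<partial>M) = 0"
proof -
  have "(\<integral>\<omega>. xi a (Y1 \<omega>) \<partial>M) = (\<integral>\<omega>. colsum a (Y1 \<omega>) \<partial>M) / a_tot - 1"
    unfolding xi_def using colsum_integrable by (simp add: prob_space)
  then show ?thesis using integral_colsum a_tot_pos by simp
qed

text \<open>The second and third moments of the column fluctuation; by shift invariance they do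
  not depend on the column.\<close>

definition sigma2 :: real where
  "sigma2 = (\<integral>\<omega>. xi 0 (Y1 \<omega>) ^ 2 \<partial>M)"

definition mu3 :: real where
  "mu3 = (\<integral>\<omega>. xi 0 (Y1 \<omega>) ^ 3 \<partial>M)"

lemma integral_xi_shift:
  fixes F :: "real \<Rightarrow> real"
  assumes [measurable]: "F \<in> borel_measurable borel"
  shows "(\<integral>\<omega>. F (xi a (Y1 \<omega>)) \<partial>M) = (\<integral>\<omega>. F (xi 0 (Y1 \<omega>)) \<partial>M)"
  using integral_mat_shift(2)[of "\<lambda>m. F (xi 0 m)" a] by (simp add: xi_shift)

lemma sigma2_pos: "sigma2 > 0"
proof -
  have nn: "AE \<omega> in M. 0 \<le> xi 0 (Y1 \<omega>) ^ 2" by simp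
  have int: "integrable M (\<lambda>\<omega>. xi 0 (Y1 \<omega>) ^ 2)"
    using L3_integrable_prod2[OF L3_xi L3_xi] by (simp add: power2_eq_square)
  have "sigma2 \<ge> 0" unfolding sigma2_def using integral_nonneg_AE[OF nn] .
  moreover have "sigma2 \<noteq> 0"
  proof
    assume "sigma2 = 0"
    then have "AE \<omega> in M. xi 0 (Y1 \<omega>) ^ 2 = 0"
      using integral_nonneg_eq_0_iff_AE[OF int nn] unfolding sigma2_def by simp
    then have "AE \<omega> in M. infsum (\<lambda>x. A 1 \<omega> x 0) UNIV = a_tot"
      using AE_infsum_column
    proof eventually_elim
      case (elim \<omega>)
      then have "colsum 0 (Y1 \<omega>) / a_tot = 1" by (simp add: xi_def)
      then show ?case using elim a_tot_pos by (simp add: field_simps)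
    qed
    then show False using nonconst by blast
  qed
  ultimately show ?thesis by simp
qed

text \<open>Independence of the columns: \<open>xi a\<close> is centred and independent of any functional of
  the columns in a set \<open>J\<close> not containing \<open>a\<close>, so the mixed moment vanishes.\<close>

lemma integral_xi_times_other_columns:
  assumes aJ: "a \<notin> J" and psi[measurable]: "psi \<in> borel_measurable (PiM J (\<lambda>_. col_space))"
    and psi_int: "integrable M (\<lambda>\<omega>. psi (restrict (\<lambda>y. \<lambda>x. A 1 \<omega> x y) J))"
  shows "(\<integral>\<omega>. xi a (Y1 \<omega>) * psi (restrict (\<lambda>y. \<lambda>x. A 1 \<omega> x y) J) \<partial>M) = 0"
proof -
  have i: "indep_var (PiM {a} (\<lambda>_. col_space)) (\<lambda>\<omega>. restrict (\<lambda>y. \<lambda>x. A 1 \<omega> x y) {a})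
                     (PiM J (\<lambda>_. col_space)) (\<lambda>\<omega>. restrict (\<lambda>y. \<lambda>x. A 1 \<omega> x y) J)"
    by (rule indep_var_restrict[OF cols]) (use aJ in auto)
  have phi: "(\<lambda>f. colf a (f a)) \<in> borel_measurable (PiM {a} (\<lambda>_. col_space))"
    using measurable_component_singleton[of a "{a}" "\<lambda>_. col_space"]
    by (rule measurable_compose[OF _ colf_measurable]) simp
  have "indep_var borel ((\<lambda>f. colf a (f a)) \<circ> (\<lambda>\<omega>. restrict (\<lambda>y. \<lambda>x. A 1 \<omega> x y) {a}))
       borel (psi \<circ> (\<lambda>\<omega>. restrict (\<lambda>y. \<lambda>x. A 1 \<omega> x y) J))"
    by (rule indep_var_compose[OF i phi psi])
  moreover have "(\<lambda>f. colf a (f a)) \<circ> (\<lambda>\<omega>. restrict (\<lambda>y. \<lambda>x. A 1 \<omega> x y) {a}) = (\<lambda>\<omega>. xi a (Y1 \<omega>))"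
    by (auto simp: xi_colf mat_of_def fun_eq_iff)
  ultimately have "indep_var borel (\<lambda>\<omega>. xi a (Y1 \<omega>)) borel (\<lambda>\<omega>. psi (restrict (\<lambda>y. \<lambda>x. A 1 \<omega> x y) J))"
    by (simp add: comp_def)
  then have "(\<integral>\<omega>. xi a (Y1 \<omega>) * psi (restrict (\<lambda>y. \<lambda>x. A 1 \<omega> x y) J) \<partial>M)
      = (\<integral>\<omega>. xi a (Y1 \<omega>) \<partial>M) * (\<integral>\<omega>. psi (restrict (\<lambda>y. \<lambda>x. A 1 \<omega> x y) J) \<partial>M)"
    by (rule indep_var_lebesgue_integral) (rule L3_integrable[OF L3_xi], rule psi_int)
  then show ?thesis using integral_xi[of a] by simp
qed

lemma moment2: "(\<integral>\<omega>. xi a (Y1 \<omega>) * xi b (Y1 \<omega>) \<partial>M) = (if a = b then sigma2 else 0)"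
proof (cases "a = b")
  case True
  then show ?thesis using integral_xi_shift[of "\<lambda>v. v ^ 2" a]
    by (simp add: sigma2_def power2_eq_square)
next
  case False
  define psi where "psi = (\<lambda>f::int^'d \<Rightarrow> int^'d \<Rightarrow> real. colf b (f b))"
  have [measurable]: "psi \<in> borel_measurable (PiM {b} (\<lambda>_. col_space))"
    unfolding psi_def using measurable_component_singleton[of b "{b}" "\<lambda>_. col_space"]
    by (rule measurable_compose[OF _ colf_measurable]) simp
  have "psi (restrict (\<lambda>y. \<lambda>x. A 1 \<omega> x y) {b}) = xi b (Y1 \<omega>)" for \<omega>
    by (simp add: psi_def xi_colf mat_of_def)
  then show ?thesis
    using integral_xi_times_other_columns[of a "{b}" psi] False L3_integrable[OF L3_xi] by simp
qed

lemma moment3: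
  "(\<integral>\<omega>. xi a (Y1 \<omega>) * xi b (Y1 \<omega>) * xi c (Y1 \<omega>) \<partial>M) = (if a = b \<and> b = c then mu3 else 0)"
proof -
  have off: "(\<integral>\<omega>. xi a (Y1 \<omega>) * (xi b (Y1 \<omega>) * xi c (Y1 \<omega>)) \<partial>M) = 0"
    if a: "a \<notin> {b, c}" for a b c
  proof -
    define psi where "psi = (\<lambda>f::int^'d \<Rightarrow> int^'d \<Rightarrow> real. colf b (f b) * colf c (f c))"
    have [measurable]: "psi \<in> borel_measurable (PiM {b, c} (\<lambda>_. col_space))"
    proof -
      have "(\<lambda>f. colf i (f i)) \<in> borel_measurable (PiM {b, c} (\<lambda>_. col_space))" if "i \<in> {b, c}" for i
        using measurable_component_singleton[OF that, of "\<lambda>_. col_space"]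
        by (rule measurable_compose[OF _ colf_measurable])
      then show ?thesis unfolding psi_def by (intro borel_measurable_times) auto
    qed
    have "psi (restrict (\<lambda>y. \<lambda>x. A 1 \<omega> x y) {b, c}) = xi b (Y1 \<omega>) * xi c (Y1 \<omega>)" for \<omega>
      by (simp add: psi_def xi_colf mat_of_def)
    then show ?thesis
      using integral_xi_times_other_columns[of a "{b, c}" psi] a L3_integrable_prod2[OF L3_xi L3_xi]
      by simp
  qed
  show ?thesis
  proof (cases "a = b \<and> b = c")
    case True
    then show ?thesis using integral_xi_shift[of "\<lambda>v. v ^ 3" a]
      by (simp add: mu3_def power3_eq_cube)
  next
    case False
    then consider "a \<notin> {b, c}" | "b \<notin> {a, c}" | "c \<notin> {a, b}" by auto
    then have "(\<integral>\<omega>. xi a (Y1 \<omega>) * xi b (Y1 \<omega>) * xi c (Y1 \<omega>) \<partial>M) = 0"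
      using off[of a b c] off[of b a c] off[of c a b] by cases (simp_all add: ac_simps)
    then show ?thesis using False by auto
  qed
qed

lemma moments_at:
  assumes t: "t \<ge> 1"
  shows "integrable M (\<lambda>\<omega>. xi a (mat_of (A t) \<omega>))"
    and "(\<integral>\<omega>. xi a (mat_of (A t) \<omega>) \<partial>M) = 0"
    and "integrable M (\<lambda>\<omega>. xi a (mat_of (A t) \<omega>) * xi b (mat_of (A t) \<omega>))"
    and "(\<integral>\<omega>. xi a (mat_of (A t) \<omega>) * xi b (mat_of (A t) \<omega>) \<partial>M) = (if a = b then sigma2 else 0)"
    and "integrable M (\<lambda>\<omega>. xi a (mat_of (A t) \<omega>) * xi b (mat_of (A t) \<omega>) * xi c (mat_of (A t) \<omega>))"
    and "(\<integral>\<omega>. xi a (mat_of (A t) \<omega>) * xi b (mat_of (A t) \<omega>) * xi c (mat_of (A t) \<omega>) \<partial>M)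
           = (if a = b \<and> b = c then mu3 else 0)"
  using integral_mat_transfer[OF t, of "xi a"]
    integral_mat_transfer[OF t, of "\<lambda>m. xi a m * xi b m"]
    integral_mat_transfer[OF t, of "\<lambda>m. xi a m * xi b m * xi c m"]
    L3_integrable[OF L3_xi] L3_integrable_prod2[OF L3_xi L3_xi]
    L3_integrable_prod3[OF L3_xi L3_xi L3_xi] integral_xi moment2 moment3
  by simp_all

lemma regular_V_t:
  assumes reg: "regular \<omega>" and t: "t \<ge> 1"
  shows "V_t M A M0 t \<omega>
       = (1 / a_tot) * (\<Sum>y\<in>Kset (t - 1). rho_fin (t - 1) \<omega> y * colsum y (mat_of (A t) \<omega>))"
proof -
  let ?K = "Kset (t - 1)"
  define f where "f = (\<lambda>(x, y). rho_star A M0 (t - 1) \<omega> y * A t \<omega> x y)"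
  define P where "P = (\<lambda>(y, u). (y + u, y)) ` (?K \<times> ball1 r)"
  have finP: "finite P" unfolding P_def using finite_Kset finite_ball1 by auto
  have outside: "f p = 0" if "p \<notin> P" for p
  proof (cases p)
    case (Pair x y)
    show ?thesis
    proof (cases "y \<in> ?K")
      case False
      then show ?thesis
        using Pair regular_rho_star[OF reg] regular_rho_fin_outside[OF reg False] by (simp add: f_def)
    next
      case True
      have "x - y \<notin> ball1 r"
      proof
        assume "x - y \<in> ball1 r"
        then have "p \<in> P" unfolding P_def Pair using True by (intro image_eqI[of _ _ "(y, x - y)"]) auto
        then show False using that by simp
      qed
      then have "A t \<omega> x y = 0" using reg t unfolding regular_def ball1_def by auto
      then show ?thesis by (simp add: f_def Pair)
    qed
  qed
  have "infsum f UNIV = sum f P" by (rule infsum_finite_support[OF finP outside])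
  also have "\<dots> = (\<Sum>q\<in>?K \<times> ball1 r. f ((\<lambda>(y, u). (y + u, y)) q))"
    unfolding P_def by (subst sum.reindex) (auto simp: inj_on_def)
  also have "\<dots> = (\<Sum>y\<in>?K. \<Sum>u\<in>ball1 r. rho_fin (t - 1) \<omega> y * A t \<omega> (y + u) y)"
    unfolding sum.cartesian_product by (rule sum.cong) (auto simp: f_def regular_rho_star[OF reg])
  also have "\<dots> = (\<Sum>y\<in>?K. rho_fin (t - 1) \<omega> y * colsum y (mat_of (A t) \<omega>))"
    by (simp add: colsum_def mat_of_def sum_distrib_left)
  finally show ?thesis unfolding V_t_def a_tot_def f_def by simp
qed

definition W :: "nat \<Rightarrow> 'w \<Rightarrow> real" where
  "W t \<omega> = (\<Sum>y\<in>Kset (t - 1). rho_fin (t - 1) \<omega> y * xi y (mat_of (A t) \<omega>))"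

lemma regular_V_t_nonneg:
  assumes reg: "regular \<omega>" and t: "t \<ge> 1"
  shows "V_t M A M0 t \<omega> \<ge> 0"
proof -
  have "colsum y (mat_of (A t) \<omega>) \<ge> 0" for y
    using reg t unfolding colsum_def mat_of_def regular_def by (auto intro!: sum_nonneg)
  then show ?thesis unfolding regular_V_t[OF reg t] using a_tot_pos
    by (intro mult_nonneg_nonneg sum_nonneg) (auto intro: rho_fin_bounds)
qed

lemma regular_V_t_W:
  assumes reg: "regular \<omega>" and t: "t \<ge> 1"
  shows "Tfin (t - 1) \<omega> > 0 \<Longrightarrow> V_t M A M0 t \<omega> = 1 + W t \<omega>"
    and "\<not> Tfin (t - 1) \<omega> > 0 \<Longrightarrow> V_t M A M0 t \<omega> = 0 \<and> W t \<omega> = 0"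
proof -
  have "W t \<omega> = (1 / a_tot) * (\<Sum>y\<in>Kset (t - 1). rho_fin (t - 1) \<omega> y * colsum y (mat_of (A t) \<omega>))
                 - (\<Sum>y\<in>Kset (t - 1). rho_fin (t - 1) \<omega> y)"
    unfolding W_def xi_def
    by (simp add: algebra_simps sum_subtractf sum_distrib_left sum_divide_distrib)
  then show "Tfin (t - 1) \<omega> > 0 \<Longrightarrow> V_t M A M0 t \<omega> = 1 + W t \<omega>"
    using regular_rho_fin_sum[OF reg] regular_V_t[OF reg t] by simp
  show "\<not> Tfin (t - 1) \<omega> > 0 \<Longrightarrow> V_t M A M0 t \<omega> = 0 \<and> W t \<omega> = 0"
    using regular_V_t[OF reg t] rho_fin_zero by (simp add: W_def)
qed

text \<open>Each power
  of \<open>W_t\<close> is expanded into a sum of \<open>F_{t-1}\<close>-measurable weights times functionals of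
  \<open>A_t\<close>, whose means are the moments of the column fluctuations.\<close>

lemma abs_rho_fin_prod_le_1:
  "\<bar>rho_fin s \<omega> a\<bar> \<le> 1" "\<bar>rho_fin s \<omega> a * rho_fin s \<omega> b\<bar> \<le> 1"
  "\<bar>rho_fin s \<omega> a * rho_fin s \<omega> b * rho_fin s \<omega> c\<bar> \<le> 1"
  by (simp_all add: abs_mult mult_le_one rho_fin_bounds)

lemma cond_exp_W:
  assumes t: "t \<ge> 1"
  shows "integrable M (W t)"
    and "AE \<omega> in M. real_cond_exp M (filt M A (t - 1)) (W t) \<omega> = 0"
proof -
  note expand = cond_exp_indep_sum[OF t finite_Kset, of "\<lambda>y \<omega>. rho_fin (t - 1) \<omega> y" xi,
      OF rho_fin_filt_measurable abs_rho_fin_prod_le_1(1) xi_measurable moments_at(1)[OF t]]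
  have W_eq: "W t = (\<lambda>\<omega>. \<Sum>y\<in>Kset (t - 1). rho_fin (t - 1) \<omega> y * xi y (mat_of (A t) \<omega>))"
    by (simp add: W_def fun_eq_iff)
  show "integrable M (W t)" unfolding W_eq by (rule expand(1))
  show "AE \<omega> in M. real_cond_exp M (filt M A (t - 1)) (W t) \<omega> = 0"
    using expand(2) unfolding W_eq by eventually_elim (simp add: moments_at(2)[OF t])
qed

lemma W_sq_expand:
  "W t \<omega> ^ 2 = (\<Sum>p\<in>Kset (t - 1) \<times> Kset (t - 1).
      (rho_fin (t - 1) \<omega> (fst p) * rho_fin (t - 1) \<omega> (snd p))
      * (xi (fst p) (mat_of (A t) \<omega>) * xi (snd p) (mat_of (A t) \<omega>)))"
  unfolding W_def power2_eq_square sum_product sum.cartesian_product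
  by (rule sum.cong) (auto simp: split_beta ac_simps)

lemma W_cube_expand:
  "W t \<omega> ^ 3 = (\<Sum>p\<in>Kset (t - 1) \<times> Kset (t - 1) \<times> Kset (t - 1).
      (rho_fin (t - 1) \<omega> (fst p) * rho_fin (t - 1) \<omega> (fst (snd p)) * rho_fin (t - 1) \<omega> (snd (snd p)))
      * (xi (fst p) (mat_of (A t) \<omega>) * xi (fst (snd p)) (mat_of (A t) \<omega>)
         * xi (snd (snd p)) (mat_of (A t) \<omega>)))"
proof -
  have "W t \<omega> ^ 3 = W t \<omega> * W t \<omega> ^ 2" by (simp add: power3_eq_cube power2_eq_square)
  also have "\<dots> = (\<Sum>p\<in>Kset (t - 1) \<times> Kset (t - 1) \<times> Kset (t - 1).
      (rho_fin (t - 1) \<omega> (fst p) * rho_fin (t - 1) \<omega> (fst (snd p)) * rho_fin (t - 1) \<omega> (snd (snd p)))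
      * (xi (fst p) (mat_of (A t) \<omega>) * xi (fst (snd p)) (mat_of (A t) \<omega>)
         * xi (snd (snd p)) (mat_of (A t) \<omega>)))"
    unfolding W_sq_expand unfolding W_def sum_product sum.cartesian_product
    by (rule sum.cong) (simp_all add: split_beta mult_ac)
  finally show ?thesis .
qed

lemma cond_exp_W2:
  assumes t: "t \<ge> 1"
  shows "integrable M (\<lambda>\<omega>. W t \<omega> ^ 2)"
    and "AE \<omega> in M. real_cond_exp M (filt M A (t - 1)) (\<lambda>\<omega>. W t \<omega> ^ 2) \<omega>
           = sigma2 * (\<Sum>y\<in>Kset (t - 1). rho_fin (t - 1) \<omega> y ^ 2)"
proof -
  let ?K = "Kset (t - 1)" and ?R = "\<lambda>y \<omega>. rho_fin (t - 1) \<omega> y"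
  have weights: "(\<lambda>\<omega>. ?R (fst p) \<omega> * ?R (snd p) \<omega>) \<in> borel_measurable (filt M A (t - 1))"
    and factors: "(\<lambda>m. xi (fst p) m * xi (snd p) m) \<in> borel_measurable mat_space" for p
    by (intro borel_measurable_times rho_fin_filt_measurable xi_measurable)+
  note expand = cond_exp_indep_sum[OF t finite_cartesian_product[OF finite_Kset finite_Kset, of "t - 1" "t - 1"],
      of "\<lambda>p \<omega>. ?R (fst p) \<omega> * ?R (snd p) \<omega>" "\<lambda>p m. xi (fst p) m * xi (snd p) m",
      OF weights abs_rho_fin_prod_le_1(2) factors moments_at(3)[OF t]]
  show "integrable M (\<lambda>\<omega>. W t \<omega> ^ 2)" unfolding W_sq_expand by (rule expand(1))
  show "AE \<omega> in M. real_cond_exp M (filt M A (t - 1)) (\<lambda>\<omega>. W t \<omega> ^ 2) \<omega>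
          = sigma2 * (\<Sum>y\<in>?K. ?R y \<omega> ^ 2)"
    unfolding W_sq_expand using expand(2)
  proof eventually_elim
    case (elim \<omega>)
    then show ?case using sum_pairs_diagonal[OF finite_Kset[of "t - 1"], of "\<lambda>a. ?R a \<omega>" sigma2]
      unfolding moments_at(4)[OF t] by (simp add: power2_eq_square)
  qed
qed

lemma cond_exp_W3:
  assumes t: "t \<ge> 1"
  shows "integrable M (\<lambda>\<omega>. W t \<omega> ^ 3)"
    and "AE \<omega> in M. real_cond_exp M (filt M A (t - 1)) (\<lambda>\<omega>. W t \<omega> ^ 3) \<omega>
           = mu3 * (\<Sum>y\<in>Kset (t - 1). rho_fin (t - 1) \<omega> y ^ 3)"
proof -
  let ?K = "Kset (t - 1)" and ?R = "\<lambda>y \<omega>. rho_fin (t - 1) \<omega> y"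
  have weights:
    "(\<lambda>\<omega>. ?R (fst p) \<omega> * ?R (fst (snd p)) \<omega> * ?R (snd (snd p)) \<omega>) \<in> borel_measurable (filt M A (t - 1))"
    and factors:
    "(\<lambda>m. xi (fst p) m * xi (fst (snd p)) m * xi (snd (snd p)) m) \<in> borel_measurable mat_space" for p
    by (intro borel_measurable_times rho_fin_filt_measurable xi_measurable)+
  note expand = cond_exp_indep_sum[OF t
      finite_cartesian_product[OF finite_Kset finite_cartesian_product[OF finite_Kset finite_Kset],
        of "t - 1" "t - 1" "t - 1"],
      of "\<lambda>p \<omega>. ?R (fst p) \<omega> * ?R (fst (snd p)) \<omega> * ?R (snd (snd p)) \<omega>"
         "\<lambda>p m. xi (fst p) m * xi (fst (snd p)) m * xi (snd (snd p)) m",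
      OF weights abs_rho_fin_prod_le_1(3) factors moments_at(5)[OF t]]
  show "integrable M (\<lambda>\<omega>. W t \<omega> ^ 3)" unfolding W_cube_expand by (rule expand(1))
  show "AE \<omega> in M. real_cond_exp M (filt M A (t - 1)) (\<lambda>\<omega>. W t \<omega> ^ 3) \<omega>
          = mu3 * (\<Sum>y\<in>?K. ?R y \<omega> ^ 3)"
    unfolding W_cube_expand using expand(2)
  proof eventually_elim
    case (elim \<omega>)
    then show ?case using sum_triples_diagonal[OF finite_Kset[of "t - 1"], of "\<lambda>a. ?R a \<omega>" mu3]
      unfolding moments_at(6)[OF t] by (simp add: power3_eq_cube)
  qed
qed

definition L_const :: real where
  "L_const = 3 + \<bar>mu3\<bar> / sigma2"

definition k_const :: "real \<Rightarrow> real" where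
  "k_const h = h * (1 - h) / 2 * (1 + L_const) powr (h - 2)"

definition c_const :: "real \<Rightarrow> real" where
  "c_const h = k_const h * sigma2 / L_const"

lemma L_const_ge_3: "L_const \<ge> 3"
  unfolding L_const_def using sigma2_pos by simp

lemma k_const_nonneg: "0 < h \<Longrightarrow> h < 1 \<Longrightarrow> k_const h \<ge> 0"
  unfolding k_const_def by (intro mult_nonneg_nonneg) auto

lemma c_const_pos: "0 < h \<Longrightarrow> h < 1 \<Longrightarrow> c_const h > 0"
  unfolding c_const_def k_const_def using sigma2_pos L_const_ge_3
  by (intro divide_pos_pos mult_pos_pos) auto

definition cubic_W :: "real \<Rightarrow> nat \<Rightarrow> 'w \<Rightarrow> real" where
  "cubic_W h t \<omega> = - h * W t \<omega> + k_const h * (1 - 2 / L_const) * W t \<omega> ^ 2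
                    - k_const h / L_const * W t \<omega> ^ 3"

text \<open>Step (1) applied at a regular point, with \<open>w = W_t\<close> (note \<open>W_t \<ge> -1\<close> because
  \<open>V_t \<ge> 0\<close>); if \<open>|M_{t-1}| = 0\<close> both sides are trivial.\<close>

lemma regular_cubic_W_le:
  assumes reg: "regular \<omega>" and t: "t \<ge> 1" and h: "0 < h" "h < 1"
  shows "cubic_W h t \<omega> \<le> 1 - V_t M A M0 t \<omega> powr h"
proof (cases "Tfin (t - 1) \<omega> > 0")
  case True
  have V: "V_t M A M0 t \<omega> = 1 + W t \<omega>" by (rule regular_V_t_W(1)[OF reg t True])
  have "W t \<omega> \<ge> -1" using regular_V_t_nonneg[OF reg t] V by simp
  then show ?thesis
    unfolding V cubic_W_def k_const_def
    by (intro one_minus_powr_cubic_lower) (use h L_const_ge_3 in auto)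
next
  case False
  then show ?thesis using regular_V_t_W(2)[OF reg t] h by (simp add: cubic_W_def)
qed

lemma integrable_one_minus_V_t_powr:
  assumes t: "t \<ge> 1" and h: "0 < h" "h < 1"
  shows "integrable M (\<lambda>\<omega>. 1 - V_t M A M0 t \<omega> powr h)"
proof (rule Bochner_Integration.integrable_bound)
  show "integrable M (\<lambda>\<omega>. 3 + \<bar>W t \<omega>\<bar>)" using cond_exp_W(1)[OF t] by simp
  show "(\<lambda>\<omega>. 1 - V_t M A M0 t \<omega> powr h) \<in> borel_measurable M" using V_t_measurable[OF t] by measurable
  show "AE \<omega> in M. norm (1 - V_t M A M0 t \<omega> powr h) \<le> norm (3 + \<bar>W t \<omega>\<bar>)"
    using AE_regular
  proof eventually_elim
    case (elim \<omega>)
    have "V_t M A M0 t \<omega> \<le> 1 + \<bar>W t \<omega>\<bar>"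
      using regular_V_t_W[OF elim t] by (cases "Tfin (t - 1) \<omega> > 0") auto
    then show ?case
      using abs_one_minus_powr_le[OF regular_V_t_nonneg[OF elim t] h] by simp
  qed
qed

lemma cond_exp_cubic_W:
  assumes t: "t \<ge> 1"
  shows "integrable M (cubic_W h t)"
    and "AE \<omega> in M. real_cond_exp M (filt M A (t - 1)) (cubic_W h t) \<omega>
           = k_const h * (1 - 2 / L_const) * (sigma2 * (\<Sum>y\<in>Kset (t - 1). rho_fin (t - 1) \<omega> y ^ 2))
             - k_const h / L_const * (mu3 * (\<Sum>y\<in>Kset (t - 1). rho_fin (t - 1) \<omega> y ^ 3))"
proof -
  interpret S: finite_measure_subalgebra M "filt M A (t - 1)"
    by unfold_locales (rule subalgebra_filt)
  define \<alpha> where "\<alpha> = k_const h * (1 - 2 / L_const)"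
  define \<beta> where "\<beta> = k_const h / L_const"
  have cubic: "cubic_W h t = (\<lambda>\<omega>. (- h * W t \<omega> + \<alpha> * W t \<omega> ^ 2) - \<beta> * W t \<omega> ^ 3)"
    unfolding cubic_W_def \<alpha>_def \<beta>_def by auto
  note i1 = cond_exp_W(1)[OF t] and i2 = cond_exp_W2(1)[OF t] and i3 = cond_exp_W3(1)[OF t]
  show "integrable M (cubic_W h t)" unfolding cubic using i1 i2 i3 by auto
  have ia: "integrable M (\<lambda>\<omega>. - h * W t \<omega>)" "integrable M (\<lambda>\<omega>. \<alpha> * W t \<omega> ^ 2)"
    "integrable M (\<lambda>\<omega>. \<beta> * W t \<omega> ^ 3)"
    using i1 i2 i3 by auto
  have "AE \<omega> in M. real_cond_exp M (filt M A (t - 1)) (cubic_W h t) \<omega>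
      = - h * real_cond_exp M (filt M A (t - 1)) (W t) \<omega>
        + \<alpha> * real_cond_exp M (filt M A (t - 1)) (\<lambda>\<omega>. W t \<omega> ^ 2) \<omega>
        - \<beta> * real_cond_exp M (filt M A (t - 1)) (\<lambda>\<omega>. W t \<omega> ^ 3) \<omega>"
    using S.real_cond_exp_diff[OF Bochner_Integration.integrable_add[OF ia(1,2)] ia(3)]
      S.real_cond_exp_add[OF ia(1,2)] S.real_cond_exp_cmult[OF i1, of "- h"]
      S.real_cond_exp_cmult[OF i2, of \<alpha>] S.real_cond_exp_cmult[OF i3, of \<beta>]
    unfolding cubic by eventually_elim simp
  then show "AE \<omega> in M. real_cond_exp M (filt M A (t - 1)) (cubic_W h t) \<omega>
      = k_const h * (1 - 2 / L_const) * (sigma2 * (\<Sum>y\<in>Kset (t - 1). rho_fin (t - 1) \<omega> y ^ 2))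
        - k_const h / L_const * (mu3 * (\<Sum>y\<in>Kset (t - 1). rho_fin (t - 1) \<omega> y ^ 3))"
    using cond_exp_W(2)[OF t] cond_exp_W2(2)[OF t] cond_exp_W3(2)[OF t]
    unfolding \<alpha>_def \<beta>_def by eventually_elim simp
qed

text \<open>At regular points \<open>|rho*^2|\<close> is the finite sum \<open>a2\<close> of squares of the profile,
  and \<open>0 \<le> a3 \<le> a2\<close> for the sum \<open>a3\<close> of cubes, since the profile takes values in \<open>[0, 1]\<close>.\<close>

lemma regular_rho_star_sq:
  assumes reg: "regular \<omega>"
  shows "infsum (\<lambda>x. (rho_star A M0 s \<omega> x)\<^sup>2) UNIV = (\<Sum>y\<in>Kset s. rho_fin s \<omega> y ^ 2)"
  unfolding regular_rho_star[OF reg]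
  by (rule infsum_finite_support[OF finite_Kset]) (simp add: regular_rho_fin_outside[OF reg])

lemma sum_rho_fin_cubes_le_squares:
  "0 \<le> (\<Sum>y\<in>Kset s. rho_fin s \<omega> y ^ 3)"
  "(\<Sum>y\<in>Kset s. rho_fin s \<omega> y ^ 3) \<le> (\<Sum>y\<in>Kset s. rho_fin s \<omega> y ^ 2)"
proof -
  show "0 \<le> (\<Sum>y\<in>Kset s. rho_fin s \<omega> y ^ 3)" by (intro sum_nonneg) (simp add: rho_fin_bounds)
  have "rho_fin s \<omega> y ^ 3 \<le> rho_fin s \<omega> y ^ 2" for y
    using power_decreasing[of 2 3 "rho_fin s \<omega> y"] rho_fin_bounds by simp
  then show "(\<Sum>y\<in>Kset s. rho_fin s \<omega> y ^ 3) \<le> (\<Sum>y\<in>Kset s. rho_fin s \<omega> y ^ 2)"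
    by (rule sum_mono)
qed

lemma cond_exp_lower_bound:
  assumes t: "t \<ge> 1" and h: "0 < h" "h < 1"
  shows "AE \<omega> in M. real_cond_exp M (filt M A (t - 1)) (\<lambda>\<omega>'. 1 - V_t M A M0 t \<omega>' powr h) \<omega>
           \<ge> c_const h * infsum (\<lambda>x. (rho_star A M0 (t - 1) \<omega> x)\<^sup>2) UNIV"
proof -
  interpret S: finite_measure_subalgebra M "filt M A (t - 1)"
    by unfold_locales (rule subalgebra_filt)
  have mono: "AE \<omega> in M. real_cond_exp M (filt M A (t - 1)) (cubic_W h t) \<omega>
      \<le> real_cond_exp M (filt M A (t - 1)) (\<lambda>\<omega>'. 1 - V_t M A M0 t \<omega>' powr h) \<omega>"
  proof (rule S.real_cond_exp_mono[OF _ cond_exp_cubic_W(1)[OF t] integrable_one_minus_V_t_powr[OF t h]])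
    show "AE \<omega> in M. cubic_W h t \<omega> \<le> 1 - V_t M A M0 t \<omega> powr h"
      using AE_regular by eventually_elim (rule regular_cubic_W_le[OF _ t h])
  qed
  show ?thesis
    using AE_regular mono cond_exp_cubic_W(2)[OF t, of h]
  proof eventually_elim
    case (elim \<omega>)
    have "c_const h * (\<Sum>y\<in>Kset (t - 1). rho_fin (t - 1) \<omega> y ^ 2)
        \<le> real_cond_exp M (filt M A (t - 1)) (cubic_W h t) \<omega>"
      unfolding elim(3) c_const_def L_const_def
      by (rule cubic_coefficients_lower[OF sigma2_pos k_const_nonneg[OF h] sum_rho_fin_cubes_le_squares])
    then show ?case using elim(2) unfolding regular_rho_star_sq[OF elim(1)] by linarith
  qed
qed

end

text \<open>The theorem: the per-time estimate holds simultaneously for all \<open>t \<ge> 1\<close>, since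
  there are countably many times.\<close>

theorem lemma4p4:
  fixes M :: "'w measure"
    and A :: "nat \<Rightarrow> 'w \<Rightarrow> int^'d \<Rightarrow> int^'d \<Rightarrow> real"
    and M0 :: "int^'d \<Rightarrow> real"
    and h :: real
  assumes prob: "prob_space M"
    \<comment> \<open>A_1, A_2, ... i.i.d. random matrices\<close>
    and indep: "prob_space.indep_vars M (\<lambda>_. mat_space) (\<lambda>t. mat_of (A t)) {1..}"
    and ident: "\<And>t. t \<ge> 1 \<Longrightarrow> distr M mat_space (mat_of (A t)) = distr M mat_space (mat_of (A 1))"
    \<comment> \<open>(i) nonnegativity\<close>
    and nonneg: "\<And>x y. AE \<omega> in M. A 1 \<omega> x y \<ge> 0"
    \<comment> \<open>(ii) independent columns\<close>
    and cols: "prob_space.indep_vars M (\<lambda>_. col_space) (\<lambda>y \<omega>. (\<lambda>x. A 1 \<omega> x y)) UNIV"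
    \<comment> \<open>(iii) square integrability\<close>
    and sq: "\<And>x y. integrable M (\<lambda>\<omega>. (A 1 \<omega> x y)\<^sup>2)"
    \<comment> \<open>(iv) finite range\<close>
    and range: "\<exists>r::nat. \<forall>x y. norm1 (x - y) > int r \<longrightarrow> (AE \<omega> in M. A 1 \<omega> x y = 0)"
    \<comment> \<open>(v) shift invariance\<close>
    and shift: "\<And>z. distr M mat_space (\<lambda>\<omega>. \<lambda>(x, y). A 1 \<omega> (x + z) (y + z))
                   = distr M mat_space (mat_of (A 1))"
    \<comment> \<open>(vi) nondegeneracy\<close>
    and basis: "\<exists>B. B \<subseteq> {x. infsum (\<lambda>y. mean_a M A (x + y) * mean_a M A y) UNIV \<noteq> 0}
                   \<and> independent (real_vec ` B) \<and> span (real_vec ` B) = UNIV"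
    \<comment> \<open>initial condition of the dual process\<close>
    and M0_nonneg: "\<And>x. M0 x \<ge> 0"
    and M0_fin: "finite {x. M0 x > 0}"
    and M0_ne: "{x. M0 x > 0} \<noteq> {}"
    \<comment> \<open>hypotheses of the lemma\<close>
    and cube: "\<And>y. integrable M (\<lambda>\<omega>. (A 1 \<omega> 0 y) ^ 3)"
    and nonconst: "\<not> (\<exists>c. AE \<omega> in M. infsum (\<lambda>x. A 1 \<omega> x 0) UNIV = c)"
    and h: "0 < h" "h < 1"
  shows "\<exists>c>0. AE \<omega> in M. \<forall>t\<ge>1.
           real_cond_exp M (filt M A (t - 1)) (\<lambda>\<omega>'. 1 - V_t M A M0 t \<omega>' powr h) \<omega>
             \<ge> c * infsum (\<lambda>x. (rho_star A M0 (t - 1) \<omega> x)\<^sup>2) UNIV"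
proof -
  obtain r :: nat where r: "\<forall>x y. norm1 (x - y) > int r \<longrightarrow> (AE \<omega> in M. A 1 \<omega> x y = 0)"
    using range by blast
  interpret random_matrix_model M A M0 r
  proof (rule random_matrix_model.intro[OF prob], rule random_matrix_model_axioms.intro)
    show "\<And>x y. int r < norm1 (x - y) \<Longrightarrow> AE \<omega> in M. A 1 \<omega> x y = 0" using r by blast
  qed (fact indep ident nonneg cols shift M0_nonneg M0_fin cube nonconst)+
  have "\<forall>t. AE \<omega> in M. t \<ge> 1 \<longrightarrow>
          real_cond_exp M (filt M A (t - 1)) (\<lambda>\<omega>'. 1 - V_t M A M0 t \<omega>' powr h) \<omega>
            \<ge> c_const h * infsum (\<lambda>x. (rho_star A M0 (t - 1) \<omega> x)\<^sup>2) UNIV"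
  proof
    fix t :: nat
    show "AE \<omega> in M. t \<ge> 1 \<longrightarrow>
            real_cond_exp M (filt M A (t - 1)) (\<lambda>\<omega>'. 1 - V_t M A M0 t \<omega>' powr h) \<omega>
              \<ge> c_const h * infsum (\<lambda>x. (rho_star A M0 (t - 1) \<omega> x)\<^sup>2) UNIV"
      using cond_exp_lower_bound[OF _ h] by (cases "t \<ge> 1") simp_all
  qed
  then have "AE \<omega> in M. \<forall>t\<ge>1.
               real_cond_exp M (filt M A (t - 1)) (\<lambda>\<omega>'. 1 - V_t M A M0 t \<omega>' powr h) \<omega>
                 \<ge> c_const h * infsum (\<lambda>x. (rho_star A M0 (t - 1) \<omega> x)\<^sup>2) UNIV"
    by (simp add: AE_all_countable)
  then show ?thesis using c_const_pos[OF h] by blast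
qed

end
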